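(* Let $n\ge3$, $k\ge2$ and $-(n-2)<q<0$. Then the operator \[ T_0=\frac{d^2}{ds^2}+(n-2)\frac{\dot\phi(s)}{\phi(s)}\frac{d}{ds}+\frac{n(n-1)}{\phi(s)^{2n-2}} \] is an isomorphism (bounded, bijective, with bounded inverse) from $\mathscr{C}^k_q(\mathbb{R})$ onto $\mathscr{C}^{k-2}_q(\mathbb{R})$.
   Context: $\phi(s)=(\cosh((n-1)s))^{1/(n-1)}$ and $\dot\phi=d\phi/ds$. For an integer $k\ge0$ and $q\in\mathbb{R}$, $\mathscr{C}^k_q(\mathbb{R})$ is the Banach space of $C^k$ functions $f:\mathbb{R}\to\mathbb{R}$ with finite norm $\|f\|_{\mathscr{C}^k_q}=\sum_{a=0}^k\sup_{s\in\mathbb{R}}|f^{(a)}(s)|\,\phi(s)^{-q}$. *)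

theory Defs
  imports "HOL-Analysis.Analysis"
begin

definition phi :: "nat \<Rightarrow> real \<Rightarrow> real" where
  "phi n s = (cosh (real (n - 1) * s)) powr (1 / real (n - 1))"

definition Ck :: "nat \<Rightarrow> (real \<Rightarrow> real) \<Rightarrow> bool" where
  "Ck k f \<longleftrightarrow> (\<forall>a<k. (deriv ^^ a) f differentiable_on UNIV)
                \<and> continuous_on UNIV ((deriv ^^ k) f)"

definition Cspace :: "nat \<Rightarrow> nat \<Rightarrow> real \<Rightarrow> (real \<Rightarrow> real) set" where
  "Cspace n k q = {f. Ck k f \<and>
     (\<forall>a\<le>k. bdd_above (range (\<lambda>s. \<bar>(deriv ^^ a) f s\<bar> * phi n s powr (-q))))}"

definition Cnorm :: "nat \<Rightarrow> nat \<Rightarrow> real \<Rightarrow> (real \<Rightarrow> real) \<Rightarrow> real" where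
  "Cnorm n k q f = (\<Sum>a\<le>k. (SUP s. \<bar>(deriv ^^ a) f s\<bar> * phi n s powr (-q)))"

definition T0 :: "nat \<Rightarrow> (real \<Rightarrow> real) \<Rightarrow> real \<Rightarrow> real" where
  "T0 n f s = (deriv ^^ 2) f s
      + real (n - 2) * (deriv (phi n) s / phi n s) * deriv f s
      + real n * real (n - 1) / phi n s ^ (2 * n - 2) * f s"

end

theory Submission
  imports Defs "HOL-Computational_Algebra.Polynomial"
begin

text \<open>Write \<open>m = n - 1\<close> and \<open>\<tau>(s) = tanh (m s)\<close>. Since \<open>\<phi>'/\<phi> = \<tau>\<close> and
  \<open>n (n - 1) / \<phi>\<^sup>2\<^sup>n\<^sup>-\<^sup>2 = m (m + 1) (1 - \<tau>\<^sup>2)\<close>, the operator is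
  \<open>T\<^sub>0 u = u'' + (m - 1) \<tau> u' + m (m + 1) (1 - \<tau>\<^sup>2) u\<close>. With \<open>Q = \<phi>\<^sup>-\<^sup>(\<^sup>n\<^sup>-\<^sup>2\<^sup>)\<close> and
  \<open>R(s) = \<integral>\<^sub>s\<^sup>\<infinity> Q\<close>, the function \<open>h = - \<tau> R - Q\<close> solves \<open>T\<^sub>0 h = 0\<close>; it decays like
  \<open>e\<^sup>-\<^sup>(\<^sup>m\<^sup>-\<^sup>1\<^sup>)\<^sup>s\<close> at \<open>+\<infinity>\<close> and is bounded at \<open>-\<infinity>\<close>, and \<open>\<phi>\<^sup>n\<^sup>-\<^sup>2\<close> times its Wronskian with
  \<open>h(-s)\<close> is a positive constant. Variation of constants with \<open>h(s)\<close> and \<open>h(-s)\<close> gives an explicit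
  right inverse, and because \<open>0 < -q < m - 1\<close> it maps data of size \<open>e\<^sup>q\<^sup>|\<^sup>s\<^sup>|\<close> to a solution
  whose value and first derivative are of size \<open>e\<^sup>q\<^sup>|\<^sup>s\<^sup>|\<close>. All higher derivatives are handled by
  differentiating the equation: they are combinations of lower derivatives and of derivatives of
  the data, with coefficients that are polynomials in the bounded function \<open>\<tau>\<close>; the same
  calculus bounds \<open>T\<^sub>0\<close> itself. For injectivity, a homogeneous solution vanishing at
  \<open>\<plusminus>\<infinity>\<close> has constant weighted Wronskians with \<open>h(s)\<close> and \<open>h(-s)\<close>; letting
  \<open>s \<rightarrow> \<plusminus>\<infinity>\<close> shows both are zero, and then the solution is zero.\<close>

definition tau :: "real \<Rightarrow> real \<Rightarrow> real" where
  "tau m x = tanh (m * x)"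

text \<open>For \<open>m = n - 1\<close> these are \<open>\<phi>\<^sup>n\<^sup>-\<^sup>2\<close> and \<open>\<phi>\<^sup>-\<^sup>(\<^sup>n\<^sup>-\<^sup>2\<^sup>)\<close>; the former is the integrating
  factor of \<open>T\<^sub>0\<close>.\<close>
definition cosh_pow :: "real \<Rightarrow> real \<Rightarrow> real" where
  "cosh_pow m x = cosh (m * x) powr ((m - 1) / m)"

definition sech_pow :: "real \<Rightarrow> real \<Rightarrow> real" where
  "sech_pow m x = cosh (m * x) powr (- ((m - 1) / m))"

lemma has_real_derivative_tau: "(tau m has_real_derivative m * (1 - tau m x ^ 2)) (at x)"
  unfolding tau_def by (auto intro!: derivative_eq_intros)

lemma has_real_derivative_cosh_powr:
  "((\<lambda>x. cosh (m * x) powr r) has_real_derivative r * m * tau m x * cosh (m * x) powr r) (at x)"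
proof -
  have "((\<lambda>x. cosh (m * x) powr r) has_real_derivative
          r * cosh (m * x) powr (r - of_nat 1) * (sinh (m * x) * m)) (at x)"
    by (rule DERIV_fun_powr) (auto intro!: derivative_eq_intros)
  moreover have "r * cosh (m * x) powr (r - of_nat 1) * (sinh (m * x) * m)
      = r * m * tau m x * cosh (m * x) powr r"
    by (simp add: powr_diff tau_def tanh_def field_simps)
  ultimately show ?thesis by (metis DERIV_cong)
qed

lemma has_real_derivative_cosh_pow:
  "(cosh_pow m has_real_derivative (m - 1) * tau m x * cosh_pow m x) (at x)"
  unfolding cosh_pow_def
  by (rule DERIV_cong[OF has_real_derivative_cosh_powr]) (cases "m = 0"; simp add: tau_def)

lemma has_real_derivative_sech_pow:
  "(sech_pow m has_real_derivative - (m - 1) * tau m x * sech_pow m x) (at x)"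
  unfolding sech_pow_def
  by (rule DERIV_cong[OF has_real_derivative_cosh_powr]) (cases "m = 0"; simp add: tau_def)

lemma continuous_on_tau: "continuous_on UNIV (tau m)"
  by (meson DERIV_continuous has_real_derivative_tau continuous_at_imp_continuous_on)

lemma continuous_on_cosh_pow: "continuous_on UNIV (cosh_pow m)"
  by (meson DERIV_continuous has_real_derivative_cosh_pow continuous_at_imp_continuous_on)

lemma continuous_on_sech_pow: "continuous_on UNIV (sech_pow m)"
  by (meson DERIV_continuous has_real_derivative_sech_pow continuous_at_imp_continuous_on)

lemma cosh_pow_mult_sech_pow: "cosh_pow m x * sech_pow m x = 1"
  unfolding cosh_pow_def sech_pow_def by (simp add: powr_minus field_simps)

lemma tau_minus [simp]: "tau m (- x) = - tau m x"
  unfolding tau_def by simp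

lemma cosh_pow_minus [simp]: "cosh_pow m (- x) = cosh_pow m x"
  unfolding cosh_pow_def by simp

lemma sech_pow_minus [simp]: "sech_pow m (- x) = sech_pow m x"
  unfolding sech_pow_def by simp

lemma abs_tau_le_1: "\<bar>tau m x\<bar> \<le> 1"
  unfolding tau_def using tanh_real_bounds[of "m * x"] by auto

lemma tau_square_le_1: "tau m x ^ 2 \<le> 1"
  using abs_tau_le_1[of m x] by (simp add: abs_square_le_1)

lemma cosh_pow_pos: "cosh_pow m x > 0"
  unfolding cosh_pow_def by simp

lemma sech_pow_pos: "sech_pow m x > 0"
  unfolding sech_pow_def by simp

lemma exp_abs_le_2_cosh: "exp \<bar>x\<bar> \<le> 2 * cosh (x :: real)"
  unfolding cosh_def by (cases "x \<ge> 0") auto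

lemma cosh_le_exp_abs: "cosh (x :: real) \<le> exp \<bar>x\<bar>"
  unfolding cosh_def by (cases "x \<ge> 0") auto

lemma cosh_powr_le_exp:
  fixes m r x :: real
  assumes "m > 0" "r \<ge> 0"
  shows "cosh (m * x) powr r \<le> exp (r * m * \<bar>x\<bar>)"
proof -
  have "cosh (m * x) powr r \<le> exp \<bar>m * x\<bar> powr r"
    using assms cosh_le_exp_abs[of "m * x"] by (intro powr_mono2) (auto intro: less_imp_le)
  also have "\<dots> = exp (r * m * \<bar>x\<bar>)"
    using assms by (simp add: exp_powr_real abs_mult)
  finally show ?thesis .
qed

lemma exp_le_cosh_powr:
  fixes m r x :: real
  assumes "m > 0" "r \<ge> 0" "r \<le> 1"
  shows "exp (r * m * \<bar>x\<bar>) / 2 \<le> cosh (m * x) powr r"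
proof -
  have "exp (r * m * \<bar>x\<bar>) / 2 \<le> exp (r * m * \<bar>x\<bar>) / 2 powr r"
    using powr_mono[of r 1 2] assms by (intro divide_left_mono) auto
  also have "\<dots> = (exp \<bar>m * x\<bar> / 2) powr r"
    using assms by (simp add: powr_divide exp_powr_real abs_mult)
  also have "\<dots> \<le> cosh (m * x) powr r"
    using assms exp_abs_le_2_cosh[of "m * x"] by (intro powr_mono2) auto
  finally show ?thesis .
qed

lemma cosh_powr_neg_le_exp:
  fixes m r x :: real
  assumes "m > 0" "r \<ge> 0" "r \<le> 1"
  shows "cosh (m * x) powr (- r) \<le> 2 * exp (- (r * m * \<bar>x\<bar>))"
proof -
  have "cosh (m * x) powr (- r) = inverse (cosh (m * x) powr r)"
    by (simp add: powr_minus)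
  also have "\<dots> \<le> inverse (exp (r * m * \<bar>x\<bar>) / 2)"
    using exp_le_cosh_powr[OF assms, of x] by (intro le_imp_inverse_le) auto
  also have "\<dots> = 2 * exp (- (r * m * \<bar>x\<bar>))"
    by (simp add: exp_minus field_simps)
  finally show ?thesis .
qed

lemma exp_le_cosh_powr_neg:
  fixes m r x :: real
  assumes "m > 0" "r \<ge> 0"
  shows "exp (- (r * m * \<bar>x\<bar>)) \<le> cosh (m * x) powr (- r)"
proof -
  have "exp (- (r * m * \<bar>x\<bar>)) = inverse (exp (r * m * \<bar>x\<bar>))"
    by (simp add: exp_minus)
  also have "\<dots> \<le> inverse (cosh (m * x) powr r)"
    using cosh_powr_le_exp[OF assms, of x] by (intro le_imp_inverse_le) auto
  also have "\<dots> = cosh (m * x) powr (- r)"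
    by (simp add: powr_minus)
  finally show ?thesis .
qed

lemma sech_pow_le_exp: "m > 1 \<Longrightarrow> sech_pow m x \<le> 2 * exp (- ((m - 1) * \<bar>x\<bar>))"
  unfolding sech_pow_def using cosh_powr_neg_le_exp[of m "(m - 1) / m" x] by simp

lemma exp_le_sech_pow: "m > 1 \<Longrightarrow> exp (- ((m - 1) * \<bar>x\<bar>)) \<le> sech_pow m x"
  unfolding sech_pow_def using exp_le_cosh_powr_neg[of m "(m - 1) / m" x] by simp

lemma sech_pow_le_1: "m > 1 \<Longrightarrow> sech_pow m x \<le> 1"
  unfolding sech_pow_def using cosh_real_ge_1[of "m * x"]
  by (simp add: powr_minus inverse_le_1_iff ge_one_powr_ge_zero)

lemma cosh_pow_le_exp: "m > 1 \<Longrightarrow> cosh_pow m x \<le> exp ((m - 1) * \<bar>x\<bar>)"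
  unfolding cosh_pow_def using cosh_powr_le_exp[of m "(m - 1) / m" x] by simp

section \<open>Integrals over half-lines\<close>

lemma negligible_atLeastAtMost_Int_atLeast: "negligible ({a..x} \<inter> {x :: real..})"
  by (rule negligible_subset[OF negligible_sing[of x]]) auto

lemma exp_bound_has_integral:
  "(\<epsilon> :: real) > 0 \<Longrightarrow> ((\<lambda>x. D * exp (- \<epsilon> * x)) has_integral D * (exp (- \<epsilon> * s) / \<epsilon>)) {s..}"
  by (rule has_integral_mult_right[OF has_integral_exp_minus_to_infinity])

context
  fixes F :: "real \<Rightarrow> real" and \<epsilon> D :: real
  assumes cont: "continuous_on UNIV F" and \<epsilon>: "\<epsilon> > 0"
    and exp_bound: "\<And>x. x \<ge> 0 \<Longrightarrow> \<bar>F x\<bar> \<le> D * exp (- \<epsilon> * x)"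
begin

lemma integrable_on_atLeast_nonneg: "s \<ge> 0 \<Longrightarrow> F integrable_on {s..}"
proof -
  assume s: "s \<ge> 0"
  have meas: "F \<in> borel_measurable (lebesgue_on {s..})"
    by (rule continuous_imp_measurable_on_sets_lebesgue) (use cont continuous_on_subset in auto)
  show ?thesis
    by (rule measurable_bounded_by_integrable_imp_integrable_real[OF meas _ _])
       (use exp_bound_has_integral[OF \<epsilon>, of D s] exp_bound s in \<open>auto simp: integrable_on_def\<close>)
qed

lemma abs_integral_atLeast_le:
  assumes "s \<ge> 0"
  shows "\<bar>integral {s..} F\<bar> \<le> D * (exp (- \<epsilon> * s) / \<epsilon>)"
proof -
  have "\<bar>integral {s..} F\<bar> \<le> integral {s..} (\<lambda>x. D * exp (- \<epsilon> * x))"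
    using integral_norm_bound_integral[OF integrable_on_atLeast_nonneg[OF assms],
        of "\<lambda>x. D * exp (- \<epsilon> * x)"] exp_bound_has_integral[OF \<epsilon>, of D s] exp_bound assms
    by (auto simp: integrable_on_def)
  also have "\<dots> = D * (exp (- \<epsilon> * s) / \<epsilon>)"
    using integral_unique[OF exp_bound_has_integral[OF \<epsilon>]] by simp
  finally show ?thesis .
qed

lemma integrable_on_atLeast: "F integrable_on {s..}"
proof (cases "s \<ge> 0")
  case False
  have "F integrable_on {s..0}"
    by (rule integrable_continuous_interval) (use cont continuous_on_subset in auto)
  moreover have "F integrable_on {0..}"
    by (rule integrable_on_atLeast_nonneg) simp
  ultimately show ?thesis
    by (rule integrable_Un'[OF _ _ negligible_atLeastAtMost_Int_atLeast]) (use False in auto)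
qed (rule integrable_on_atLeast_nonneg)

lemma integral_atLeast_split:
  assumes "a \<le> x"
  shows "integral {a..} F = integral {a..x} F + integral {x..} F"
proof -
  have "F integrable_on {a..x}"
    by (rule integrable_continuous_interval) (use cont continuous_on_subset in auto)
  moreover have "{a..} = {a..x} \<union> {x..}"
    using assms by auto
  ultimately show ?thesis
    using integral_Un[OF _ integrable_on_atLeast negligible_atLeastAtMost_Int_atLeast] by metis
qed

lemma has_real_derivative_integral_atLeast:
  "((\<lambda>s. integral {s..} F) has_real_derivative - F s) (at s)"
proof -
  define a where "a = s - 1"
  have "((\<lambda>x. integral {a..x} F) has_real_derivative F s) (at s within {a..s + 1})"
    by (rule integral_has_real_derivative) (use cont continuous_on_subset a_def in auto)
  moreover have "at s within {a..s + 1} = at s"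
    by (rule at_within_interior) (simp add: a_def)
  ultimately have "((\<lambda>x. integral {a..x} F) has_real_derivative F s) (at s)"
    by simp
  then have "((\<lambda>x. integral {a..} F - integral {a..x} F) has_real_derivative 0 - F s) (at s)"
    by (rule DERIV_diff[OF DERIV_const])
  then have "((\<lambda>x. integral {a..} F - integral {a..x} F) has_real_derivative - F s) (at s)"
    by simp
  then show ?thesis
  proof (rule has_field_derivative_transform_within_open[of _ _ _ "{a<..}"])
    show "integral {a..} F - integral {a..x} F = integral {x..} F" if "x \<in> {a<..}" for x
      using integral_atLeast_split[of a x] that by simp
  qed (auto simp: a_def)
qed

end

lemma integral_exp_neg_le:
  fixes \<epsilon> s :: real
  assumes "\<epsilon> > 0" "s \<le> 0"
  shows "integral {s..0} (\<lambda>x. exp (- \<epsilon> * x)) \<le> exp (- \<epsilon> * s) / \<epsilon>"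
proof -
  have antiderivative:
    "((\<lambda>x. - exp (- \<epsilon> * x) / \<epsilon>) has_vector_derivative exp (- \<epsilon> * x)) (at x within {s..0})" for x
  proof -
    have "((\<lambda>x. - exp (- \<epsilon> * x) / \<epsilon>) has_real_derivative exp (- \<epsilon> * x)) (at x)"
      using assms by (auto intro!: derivative_eq_intros)
    then show ?thesis
      by (simp add: has_real_derivative_iff_has_vector_derivative[symmetric] has_field_derivative_at_within)
  qed
  have "((\<lambda>x. exp (- \<epsilon> * x)) has_integral (- exp (- \<epsilon> * 0) / \<epsilon>) - (- exp (- \<epsilon> * s) / \<epsilon>)) {s..0}"
    by (rule fundamental_theorem_of_calculus) (use assms antiderivative in blast)+
  then show ?thesis
    using assms by (simp add: integral_unique)
qed

section \<open>A homogeneous solution\<close>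

definition sech_pow_tail :: "real \<Rightarrow> real \<Rightarrow> real" where
  "sech_pow_tail m s = integral {s..} (sech_pow m)"

definition sech_pow_integral :: "real \<Rightarrow> real" where
  "sech_pow_integral m = 2 * sech_pow_tail m 0"

context
  fixes m :: real
  assumes m: "m > 1"
begin

lemma abs_sech_pow_le_exp: "x \<ge> 0 \<Longrightarrow> \<bar>sech_pow m x\<bar> \<le> 2 * exp (- (m - 1) * x)"
  using sech_pow_le_exp[OF m, of x] sech_pow_pos[of m x]
  by (simp only: minus_mult_left abs_of_nonneg abs_of_pos)

lemmas sech_pow_tail_integrable =
  integrable_on_atLeast[OF continuous_on_sech_pow _ abs_sech_pow_le_exp]

lemma has_real_derivative_sech_pow_tail:
  "(sech_pow_tail m has_real_derivative - sech_pow m s) (at s)"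
  unfolding sech_pow_tail_def[abs_def]
  by (rule has_real_derivative_integral_atLeast[OF continuous_on_sech_pow _ abs_sech_pow_le_exp])
     (use m in simp)

lemma sech_pow_tail_nonneg: "sech_pow_tail m s \<ge> 0"
  unfolding sech_pow_tail_def
  by (rule integral_nonneg[OF sech_pow_tail_integrable]) (use m sech_pow_pos less_imp_le in auto)

lemma sech_pow_tail_le_exp: "s \<ge> 0 \<Longrightarrow> sech_pow_tail m s \<le> 2 / (m - 1) * exp (- (m - 1) * s)"
  unfolding sech_pow_tail_def
  using m abs_integral_atLeast_le[OF continuous_on_sech_pow _ abs_sech_pow_le_exp, of s] by simp

lemma sech_pow_integral_pos: "sech_pow_integral m > 0"
proof -
  have exp_int: "((\<lambda>x. exp (- (m - 1) * x)) has_integral exp (- (m - 1) * 0) / (m - 1)) {0..}"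
    using m by (intro has_integral_exp_minus_to_infinity) simp
  have "integral {0..} (\<lambda>x. exp (- (m - 1) * x)) \<le> integral {0..} (sech_pow m)"
  proof (rule integral_le)
    show "exp (- (m - 1) * x) \<le> sech_pow m x" if "x \<in> {0..}" for x
      using exp_le_sech_pow[OF m, of x] that
      by (simp only: minus_mult_left abs_of_nonneg atLeast_iff)
  qed (use exp_int sech_pow_tail_integrable m in \<open>auto simp: integrable_on_def\<close>)
  then have "sech_pow_tail m 0 \<ge> 1 / (m - 1)"
    using integral_unique[OF exp_int] unfolding sech_pow_tail_def by simp
  moreover have "1 / (m - 1) > 0"
    using m by simp
  ultimately show ?thesis
    unfolding sech_pow_integral_def by linarith
qed

lemma sech_pow_tail_add_minus: "sech_pow_tail m s + sech_pow_tail m (- s) = sech_pow_integral m"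
proof -
  have "((\<lambda>s. sech_pow_tail m s + sech_pow_tail m (- s)) has_real_derivative 0) (at x)" for x
    using DERIV_add[OF has_real_derivative_sech_pow_tail
        DERIV_chain2[OF has_real_derivative_sech_pow_tail DERIV_minus[OF DERIV_ident]]]
    by simp
  from DERIV_isconst_all[OF allI[OF this], of s 0] show ?thesis
    by (simp add: sech_pow_integral_def)
qed

lemma sech_pow_tail_le_integral: "sech_pow_tail m s \<le> sech_pow_integral m"
  using sech_pow_tail_add_minus[of s] sech_pow_tail_nonneg[of "- s"] by linarith

end

text \<open>A solution of \<open>y'' + (m - 1) \<tau> y' + m (m + 1) (1 - \<tau>\<^sup>2) y = 0\<close> that decays like
  \<open>e\<^sup>-\<^sup>(\<^sup>m\<^sup>-\<^sup>1\<^sup>)\<^sup>x\<close> at \<open>+\<infinity>\<close> and tends to \<open>sech_pow_integral m\<close> at \<open>-\<infinity>\<close>;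
  \<open>x \<mapsto> hom_sol m (- x)\<close> is the second, independent solution.\<close>
definition hom_sol :: "real \<Rightarrow> real \<Rightarrow> real" where
  "hom_sol m x = - tau m x * sech_pow_tail m x - sech_pow m x"

definition hom_sol_d1 :: "real \<Rightarrow> real \<Rightarrow> real" where
  "hom_sol_d1 m x = - m * (1 - tau m x ^ 2) * sech_pow_tail m x + m * tau m x * sech_pow m x"

definition hom_sol_d2 :: "real \<Rightarrow> real \<Rightarrow> real" where
  "hom_sol_d2 m x = 2 * m^2 * tau m x * (1 - tau m x ^ 2) * sech_pow_tail m x
     + m * (m + 1) * (1 - tau m x ^ 2) * sech_pow m x - m * (m - 1) * tau m x ^ 2 * sech_pow m x"

definition right_decay :: "real \<Rightarrow> real \<Rightarrow> real" where
  "right_decay m x = (if x \<ge> 0 then exp (- (m - 1) * x) else 1)"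

definition hom_sol_const :: "real \<Rightarrow> real" where
  "hom_sol_const m = 2 / (m - 1) + 2 + sech_pow_integral m"

lemma right_decay_pos: "right_decay m x > 0"
  unfolding right_decay_def by simp

context
  fixes m :: real
  assumes m: "m > 1"
begin

lemma has_real_derivative_hom_sol: "(hom_sol m has_real_derivative hom_sol_d1 m x) (at x)"
  unfolding hom_sol_def[abs_def] hom_sol_d1_def
  using m
  by (intro DERIV_cong[OF DERIV_diff[OF DERIV_mult'[OF DERIV_minus[OF has_real_derivative_tau]
          has_real_derivative_sech_pow_tail] has_real_derivative_sech_pow]])
     (auto simp: algebra_simps)

lemma has_real_derivative_hom_sol_d1: "(hom_sol_d1 m has_real_derivative hom_sol_d2 m x) (at x)"
  unfolding hom_sol_d1_def[abs_def] hom_sol_d2_def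
  using m
  by (intro DERIV_cong[OF DERIV_add[OF
          DERIV_mult'[OF DERIV_mult'[OF DERIV_const DERIV_diff[OF DERIV_const
              DERIV_power[OF has_real_derivative_tau]]] has_real_derivative_sech_pow_tail]
          DERIV_mult'[OF DERIV_mult'[OF DERIV_const has_real_derivative_tau]
              has_real_derivative_sech_pow]]])
     (auto simp: algebra_simps power2_eq_square)

lemma continuous_on_hom_sol: "continuous_on UNIV (hom_sol m)"
  by (meson DERIV_continuous has_real_derivative_hom_sol continuous_at_imp_continuous_on)

lemma hom_sol_ode:
  "hom_sol_d2 m x + (m - 1) * tau m x * hom_sol_d1 m x + m * (m + 1) * (1 - tau m x ^ 2) * hom_sol m x = 0"
  unfolding hom_sol_def hom_sol_d1_def hom_sol_d2_def by (simp add: algebra_simps power2_eq_square)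

text \<open>A constant times \<open>sech_pow m\<close>, because \<open>cosh_pow m\<close> is an integrating factor of the equation.\<close>
lemma hom_sol_wronskian:
  "hom_sol m (- s) * hom_sol_d1 m s + hom_sol_d1 m (- s) * hom_sol m s
     = m * sech_pow_integral m * sech_pow m s"
proof -
  have tail_minus: "sech_pow_tail m (- s) = sech_pow_integral m - sech_pow_tail m s"
    using sech_pow_tail_add_minus[OF m, of s] by simp
  show ?thesis
    unfolding hom_sol_def hom_sol_d1_def tail_minus by (simp add: algebra_simps power2_eq_square)
qed

lemma hom_sol_const_pos: "hom_sol_const m > 0"
  unfolding hom_sol_const_def using m sech_pow_integral_pos[OF m] by (simp add: add_pos_pos)

lemma sech_pow_tail_add_sech_pow_le:
  "sech_pow_tail m x + sech_pow m x \<le> hom_sol_const m * right_decay m x"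
proof (cases "x \<ge> 0")
  case True
  have "sech_pow_tail m x + sech_pow m x \<le> (2 / (m - 1) + 2) * exp (- (m - 1) * x)"
    using sech_pow_tail_le_exp[OF m True] abs_sech_pow_le_exp[OF m True] sech_pow_pos[of m x]
    by (simp add: algebra_simps)
  also have "\<dots> \<le> hom_sol_const m * exp (- (m - 1) * x)"
    unfolding hom_sol_const_def using sech_pow_integral_pos[OF m] by (intro mult_right_mono) auto
  finally show ?thesis
    using True by (simp add: right_decay_def)
next
  case False
  have "2 / (m - 1) > 0"
    using m by simp
  then have "sech_pow_tail m x + sech_pow m x \<le> hom_sol_const m"
    using sech_pow_tail_le_integral[OF m, of x] sech_pow_le_1[OF m, of x]
    unfolding hom_sol_const_def by linarith
  then show ?thesis
    using False by (simp add: right_decay_def)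
qed

lemma abs_hom_sol_le: "\<bar>hom_sol m x\<bar> \<le> hom_sol_const m * right_decay m x"
proof -
  have "\<bar>tau m x * sech_pow_tail m x\<bar> \<le> sech_pow_tail m x"
    using abs_tau_le_1[of m x] sech_pow_tail_nonneg[OF m, of x]
    by (simp add: abs_mult mult_left_le_one_le)
  then have "\<bar>hom_sol m x\<bar> \<le> sech_pow_tail m x + sech_pow m x"
    unfolding hom_sol_def using sech_pow_pos[of m x] by linarith
  with sech_pow_tail_add_sech_pow_le[of x] show ?thesis
    by linarith
qed

lemma abs_hom_sol_d1_le: "\<bar>hom_sol_d1 m x\<bar> \<le> m * hom_sol_const m * right_decay m x"
proof -
  have "0 \<le> 1 - tau m x ^ 2" "1 - tau m x ^ 2 \<le> 1"
    using tau_square_le_1[of m x] by auto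
  then have "\<bar>m * (1 - tau m x ^ 2) * sech_pow_tail m x\<bar> \<le> m * sech_pow_tail m x"
    using m sech_pow_tail_nonneg[OF m, of x] by (simp add: abs_mult mult_left_le_one_le mult.assoc)
  moreover have "\<bar>m * tau m x * sech_pow m x\<bar> \<le> m * sech_pow m x"
    using m abs_tau_le_1[of m x] sech_pow_pos[of m x]
    by (simp add: abs_mult mult_left_le_one_le mult.assoc)
  ultimately have "\<bar>hom_sol_d1 m x\<bar> \<le> m * (sech_pow_tail m x + sech_pow m x)"
    unfolding hom_sol_d1_def by (simp add: algebra_simps)
  also have "\<dots> \<le> m * (hom_sol_const m * right_decay m x)"
    using m sech_pow_tail_add_sech_pow_le by (intro mult_left_mono) auto
  finally show ?thesis
    by (simp add: mult.assoc)
qed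

end

lemma has_real_derivative_hom_sol_reflect:
  "m > 1 \<Longrightarrow> ((\<lambda>s. hom_sol m (- s)) has_real_derivative - hom_sol_d1 m (- s)) (at s)"
  using DERIV_chain2[OF has_real_derivative_hom_sol DERIV_minus[OF DERIV_ident]] by simp

lemma has_real_derivative_hom_sol_d1_reflect:
  "m > 1 \<Longrightarrow> ((\<lambda>s. hom_sol_d1 m (- s)) has_real_derivative - hom_sol_d2 m (- s)) (at s)"
  using DERIV_chain2[OF has_real_derivative_hom_sol_d1 DERIV_minus[OF DERIV_ident]] by simp

lemma hom_sol_reflect_ode:
  "m > 1 \<Longrightarrow> hom_sol_d2 m (- s) + (m - 1) * tau m s * (- hom_sol_d1 m (- s))
     + m * (m + 1) * (1 - tau m s ^ 2) * hom_sol m (- s) = 0"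
  using hom_sol_ode[of m "- s"] by (simp add: algebra_simps)

lemma hom_sol_d2_combination:
  assumes m: "m > 1"
  shows "hom_sol_d2 m s * A + hom_sol_d2 m (- s) * B
    = - ((m - 1) * tau m s * (hom_sol_d1 m s * A - hom_sol_d1 m (- s) * B))
      - m * (m + 1) * (1 - tau m s ^ 2) * (hom_sol m s * A + hom_sol m (- s) * B)"
proof -
  have ode: "hom_sol_d2 m s
      = - (m - 1) * tau m s * hom_sol_d1 m s - m * (m + 1) * (1 - tau m s ^ 2) * hom_sol m s"
    using hom_sol_ode[OF m, of s] by linarith
  have reflect_ode: "hom_sol_d2 m (- s)
      = (m - 1) * tau m s * hom_sol_d1 m (- s) - m * (m + 1) * (1 - tau m s ^ 2) * hom_sol m (- s)"
    using hom_sol_reflect_ode[OF m, of s] by linarith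
  show ?thesis
    unfolding ode reflect_ode by (simp add: algebra_simps)
qed

section \<open>Variation of constants\<close>

definition forcing_tail :: "real \<Rightarrow> (real \<Rightarrow> real) \<Rightarrow> real \<Rightarrow> real" where
  "forcing_tail m G s = integral {s..} (\<lambda>x. hom_sol m x * cosh_pow m x * G x)"

text \<open>Variation of constants with the solutions \<open>hom_sol m\<close> and \<open>hom_sol m \<circ> uminus\<close>; the factor
  \<open>cosh_pow m\<close> in \<open>forcing_tail\<close> is the inverse of the non-constant part of their Wronskian.\<close>
definition green_sol :: "real \<Rightarrow> (real \<Rightarrow> real) \<Rightarrow> real \<Rightarrow> real" where
  "green_sol m G s = (hom_sol m s * forcing_tail m (\<lambda>x. G (- x)) (- s)
      + hom_sol m (- s) * forcing_tail m G s) / (m * sech_pow_integral m)"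

definition green_sol_d1 :: "real \<Rightarrow> (real \<Rightarrow> real) \<Rightarrow> real \<Rightarrow> real" where
  "green_sol_d1 m G s = (hom_sol_d1 m s * forcing_tail m (\<lambda>x. G (- x)) (- s)
      - hom_sol_d1 m (- s) * forcing_tail m G s) / (m * sech_pow_integral m)"

definition tail_decay :: "real \<Rightarrow> real \<Rightarrow> real \<Rightarrow> real" where
  "tail_decay m b s = (if s \<ge> 0 then exp (- b * s) else exp (- (m - 1 - b) * s))"

definition forcing_tail_const :: "real \<Rightarrow> real \<Rightarrow> real" where
  "forcing_tail_const m b = hom_sol_const m * (1 / b + 1 / (m - 1 - b))"

definition green_sol_const :: "real \<Rightarrow> real \<Rightarrow> real" where
  "green_sol_const m b = 2 * hom_sol_const m * forcing_tail_const m b / (m * sech_pow_integral m)"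

lemma wronskian_const_pos: "m > 1 \<Longrightarrow> m * sech_pow_integral m > 0"
  using sech_pow_integral_pos[of m] by simp

lemma green_sol_const_nonneg: "m > 1 \<Longrightarrow> 0 < b \<Longrightarrow> b < m - 1 \<Longrightarrow> green_sol_const m b \<ge> 0"
  unfolding green_sol_const_def forcing_tail_const_def
  using hom_sol_const_pos[of m] wronskian_const_pos[of m] by simp

lemma right_decay_mult_tail_decay:
  "right_decay m s * tail_decay m b (- s) = exp (- b * \<bar>s\<bar>)"
  "right_decay m (- s) * tail_decay m b s = exp (- b * \<bar>s\<bar>)"
  unfolding right_decay_def tail_decay_def
  by (cases "s > 0"; cases "s = 0"; simp add: mult_exp_exp algebra_simps)+

context
  fixes m b G0 :: real and G :: "real \<Rightarrow> real"
  assumes m: "m > 1" and b: "0 < b" "b < m - 1"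
    and G_cont: "continuous_on UNIV G" and G_bound: "\<And>x. \<bar>G x\<bar> \<le> G0 * exp (- b * \<bar>x\<bar>)"
begin

lemma G0_nonneg: "G0 \<ge> 0"
  using G_bound[of 0] by (simp add: zero_le_mult_iff)

lemma continuous_on_forcing: "continuous_on UNIV (\<lambda>x. hom_sol m x * cosh_pow m x * G x)"
  by (intro continuous_intros continuous_on_hom_sol[OF m] continuous_on_cosh_pow G_cont)

lemma abs_forcing_le_nonneg:
  assumes x: "x \<ge> 0"
  shows "\<bar>hom_sol m x * cosh_pow m x * G x\<bar> \<le> hom_sol_const m * G0 * exp (- b * x)"
proof -
  have h: "\<bar>hom_sol m x\<bar> \<le> hom_sol_const m * exp (- (m - 1) * x)"
    using abs_hom_sol_le[OF m, of x] x by (simp add: right_decay_def)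
  have p: "\<bar>cosh_pow m x\<bar> \<le> exp ((m - 1) * x)"
    using cosh_pow_le_exp[OF m, of x] cosh_pow_pos[of m x] x by simp
  have g: "\<bar>G x\<bar> \<le> G0 * exp (- b * x)"
    using G_bound[of x] x by simp
  have "\<bar>hom_sol m x * cosh_pow m x * G x\<bar>
      \<le> (hom_sol_const m * exp (- (m - 1) * x)) * exp ((m - 1) * x) * (G0 * exp (- b * x))"
    unfolding abs_mult
    by (intro mult_mono h p g) (auto simp: hom_sol_const_pos[OF m, THEN less_imp_le] G0_nonneg)
  also have "\<dots> = hom_sol_const m * G0 * exp (- b * x)"
  proof -
    have "exp (- (m - 1) * x) * exp ((m - 1) * x) = 1"
      by (simp add: mult_exp_exp algebra_simps)
    then show ?thesis
      by (metis (no_types, lifting) mult.assoc mult.commute mult.left_commute mult_1)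
  qed
  finally show ?thesis .
qed

lemma abs_forcing_le_nonpos:
  assumes x: "x \<le> 0"
  shows "\<bar>hom_sol m x * cosh_pow m x * G x\<bar> \<le> hom_sol_const m * G0 * exp (- (m - 1 - b) * x)"
proof -
  have h: "\<bar>hom_sol m x\<bar> \<le> hom_sol_const m"
    using abs_hom_sol_le[OF m, of x] x by (cases "x = 0") (auto simp: right_decay_def)
  have p: "\<bar>cosh_pow m x\<bar> \<le> exp (- (m - 1) * x)"
    using cosh_pow_le_exp[OF m, of x] cosh_pow_pos[of m x] x
    by (simp add: abs_of_nonpos algebra_simps)
  have g: "\<bar>G x\<bar> \<le> G0 * exp (b * x)"
    using G_bound[of x] x by simp
  have "\<bar>hom_sol m x * cosh_pow m x * G x\<bar> \<le> hom_sol_const m * exp (- (m - 1) * x) * (G0 * exp (b * x))"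
    unfolding abs_mult
    by (intro mult_mono h p g) (auto simp: hom_sol_const_pos[OF m, THEN less_imp_le] G0_nonneg)
  also have "\<dots> = hom_sol_const m * G0 * exp (- (m - 1 - b) * x)"
  proof -
    have "exp (- (m - 1) * x) * exp (b * x) = exp (- (m - 1 - b) * x)"
      by (simp add: mult_exp_exp algebra_simps)
    then show ?thesis
      by (metis (no_types, lifting) mult.assoc mult.commute mult.left_commute)
  qed
  finally show ?thesis .
qed

lemma has_real_derivative_forcing_tail:
  "(forcing_tail m G has_real_derivative - (hom_sol m s * cosh_pow m s * G s)) (at s)"
  unfolding forcing_tail_def[abs_def]
  by (rule has_real_derivative_integral_atLeast[OF continuous_on_forcing b(1) abs_forcing_le_nonneg])

lemma abs_forcing_tail_le_nonneg:
  "s \<ge> 0 \<Longrightarrow> \<bar>forcing_tail m G s\<bar> \<le> hom_sol_const m * G0 * (exp (- b * s) / b)"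
  unfolding forcing_tail_def
  by (rule abs_integral_atLeast_le[OF continuous_on_forcing b(1) abs_forcing_le_nonneg])

lemma abs_integral_forcing_le_nonpos:
  assumes s: "s \<le> 0"
  shows "\<bar>integral {s..0} (\<lambda>x. hom_sol m x * cosh_pow m x * G x)\<bar>
    \<le> hom_sol_const m * G0 * (exp (- (m - 1 - b) * s) / (m - 1 - b))"
proof -
  let ?F = "\<lambda>x. hom_sol m x * cosh_pow m x * G x" and ?c = "m - 1 - b"
  have F_int: "?F integrable_on {s..0}"
    by (rule integrable_continuous_interval) (use continuous_on_forcing continuous_on_subset in auto)
  have exp_int: "(\<lambda>x. hom_sol_const m * G0 * exp (- ?c * x)) integrable_on {s..0}"
    by (rule integrable_continuous_interval) (auto intro!: continuous_intros)
  have "\<bar>integral {s..0} ?F\<bar> \<le> integral {s..0} (\<lambda>x. hom_sol_const m * G0 * exp (- ?c * x))"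
    using integral_norm_bound_integral[OF F_int exp_int] abs_forcing_le_nonpos by auto
  also have "\<dots> = hom_sol_const m * G0 * integral {s..0} (\<lambda>x. exp (- ?c * x))"
    by simp
  also have "\<dots> \<le> hom_sol_const m * G0 * (exp (- ?c * s) / ?c)"
    using b by (intro mult_left_mono integral_exp_neg_le)
       (use s G0_nonneg hom_sol_const_pos[OF m] in auto)
  finally show ?thesis .
qed

lemma abs_forcing_tail_le:
  "\<bar>forcing_tail m G s\<bar> \<le> forcing_tail_const m b * G0 * tail_decay m b s"
proof (cases "s \<ge> 0")
  case True
  have "hom_sol_const m * (1 / b) \<le> forcing_tail_const m b"
    unfolding forcing_tail_const_def using hom_sol_const_pos[OF m] b
    by (intro mult_left_mono) auto
  then have "hom_sol_const m * (1 / b) * (G0 * exp (- b * s)) \<le> forcing_tail_const m b * (G0 * exp (- b * s))"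
    using G0_nonneg by (intro mult_right_mono) auto
  with abs_forcing_tail_le_nonneg[OF True] show ?thesis
    using True by (simp add: tail_decay_def algebra_simps)
next
  case False
  let ?F = "\<lambda>x. hom_sol m x * cosh_pow m x * G x" and ?c = "m - 1 - b"
  have "\<bar>integral {0..} ?F\<bar> \<le> hom_sol_const m * G0 * (exp (- b * 0) / b)"
    using abs_forcing_tail_le_nonneg[of 0] unfolding forcing_tail_def by simp
  also have "\<dots> \<le> hom_sol_const m * G0 * (exp (- ?c * s) / b)"
    using False b G0_nonneg hom_sol_const_pos[OF m]
    by (intro mult_left_mono divide_right_mono) (auto simp: mult_nonpos_nonpos)
  finally have far: "\<bar>integral {0..} ?F\<bar> \<le> hom_sol_const m * G0 * (exp (- ?c * s) / b)" .
  have "forcing_tail m G s = integral {s..0} ?F + integral {0..} ?F"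
    unfolding forcing_tail_def
    using integral_atLeast_split[OF continuous_on_forcing b(1) abs_forcing_le_nonneg, of s 0] False
    by simp
  then have "\<bar>forcing_tail m G s\<bar> \<le> hom_sol_const m * G0 * (exp (- ?c * s) / ?c)
      + hom_sol_const m * G0 * (exp (- ?c * s) / b)"
    using abs_integral_forcing_le_nonpos[of s] False far by linarith
  also have "\<dots> = forcing_tail_const m b * G0 * exp (- ?c * s)"
    unfolding forcing_tail_const_def by (simp add: algebra_simps)
  finally show ?thesis
    using False by (simp add: tail_decay_def)
qed

end

context
  fixes m b G0 :: real and G :: "real \<Rightarrow> real"
  assumes m: "m > 1" and b: "0 < b" "b < m - 1"
    and G_cont: "continuous_on UNIV G" and G_bound: "\<And>x. \<bar>G x\<bar> \<le> G0 * exp (- b * \<bar>x\<bar>)"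
begin

lemma continuous_on_reflect: "continuous_on UNIV (\<lambda>x. G (- x))"
  by (rule continuous_on_compose2[OF G_cont]) (auto intro!: continuous_intros)

lemma abs_reflect_le: "\<bar>G (- x)\<bar> \<le> G0 * exp (- b * \<bar>x\<bar>)"
  using G_bound[of "- x"] by simp

lemmas forcing_tail_facts = has_real_derivative_forcing_tail[OF m b G_cont G_bound]
  abs_forcing_tail_le[OF m b G_cont G_bound]

lemmas forcing_tail_reflect_facts = has_real_derivative_forcing_tail[OF m b continuous_on_reflect abs_reflect_le]
  abs_forcing_tail_le[OF m b continuous_on_reflect abs_reflect_le]

lemma has_real_derivative_forcing_tail_reflect:
  "((\<lambda>s. forcing_tail m (\<lambda>x. G (- x)) (- s)) has_real_derivative hom_sol m (- s) * cosh_pow m s * G s) (at s)"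
  using DERIV_chain2[OF forcing_tail_reflect_facts(1) DERIV_minus[OF DERIV_ident]] by simp

lemma abs_green_sol_terms_le:
  assumes Y: "\<And>x. \<bar>Y x\<bar> \<le> K * right_decay m x" and K: "K \<ge> 0"
  shows "\<bar>Y s * forcing_tail m (\<lambda>x. G (- x)) (- s)\<bar> + \<bar>Y (- s) * forcing_tail m G s\<bar>
    \<le> 2 * (K * (forcing_tail_const m b * G0)) * exp (- b * \<bar>s\<bar>)"
proof -
  have "0 \<le> K * right_decay m x" for x
    using K right_decay_pos[of m x] by simp
  then have "\<bar>Y s * forcing_tail m (\<lambda>x. G (- x)) (- s)\<bar>
      \<le> (K * right_decay m s) * (forcing_tail_const m b * G0 * tail_decay m b (- s))"
    and "\<bar>Y (- s) * forcing_tail m G s\<bar>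
      \<le> (K * right_decay m (- s)) * (forcing_tail_const m b * G0 * tail_decay m b s)"
    unfolding abs_mult using Y forcing_tail_facts(2) forcing_tail_reflect_facts(2)
    by (auto intro: mult_mono)
  then show ?thesis
    using right_decay_mult_tail_decay[of m s b] by (simp add: algebra_simps)
qed

lemma abs_green_sol_le: "\<bar>green_sol m G s\<bar> \<le> green_sol_const m b * G0 * exp (- b * \<bar>s\<bar>)"
proof -
  have "\<bar>green_sol m G s\<bar> \<le> (\<bar>hom_sol m s * forcing_tail m (\<lambda>x. G (- x)) (- s)\<bar>
      + \<bar>hom_sol m (- s) * forcing_tail m G s\<bar>) / (m * sech_pow_integral m)"
    unfolding green_sol_def using wronskian_const_pos[OF m]
    by (simp add: abs_divide divide_right_mono abs_triangle_ineq)
  also have "\<dots> \<le> 2 * (hom_sol_const m * (forcing_tail_const m b * G0)) * exp (- b * \<bar>s\<bar>)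
      / (m * sech_pow_integral m)"
    using abs_green_sol_terms_le[OF abs_hom_sol_le[OF m]] hom_sol_const_pos[OF m] wronskian_const_pos[OF m]
    by (intro divide_right_mono) auto
  finally show ?thesis
    by (simp add: green_sol_const_def algebra_simps)
qed

lemma abs_green_sol_d1_le: "\<bar>green_sol_d1 m G s\<bar> \<le> m * green_sol_const m b * G0 * exp (- b * \<bar>s\<bar>)"
proof -
  have "\<bar>green_sol_d1 m G s\<bar> \<le> (\<bar>hom_sol_d1 m s * forcing_tail m (\<lambda>x. G (- x)) (- s)\<bar>
      + \<bar>hom_sol_d1 m (- s) * forcing_tail m G s\<bar>) / (m * sech_pow_integral m)"
    unfolding green_sol_d1_def using wronskian_const_pos[OF m]
    by (simp add: abs_divide divide_right_mono abs_triangle_ineq4)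
  also have "\<dots> \<le> 2 * ((m * hom_sol_const m) * (forcing_tail_const m b * G0)) * exp (- b * \<bar>s\<bar>)
      / (m * sech_pow_integral m)"
    using abs_green_sol_terms_le[OF abs_hom_sol_d1_le[OF m]] hom_sol_const_pos[OF m] wronskian_const_pos[OF m] m
    by (intro divide_right_mono) auto
  finally show ?thesis
    using m by (simp add: green_sol_const_def algebra_simps)
qed

lemma has_real_derivative_green_sol: "(green_sol m G has_real_derivative green_sol_d1 m G s) (at s)"
  unfolding green_sol_def[abs_def]
  by (rule DERIV_cong, (rule DERIV_cdivide DERIV_add DERIV_mult' has_real_derivative_hom_sol[OF m]
        has_real_derivative_hom_sol_reflect[OF m] has_real_derivative_forcing_tail_reflect
        forcing_tail_facts(1))+)
     (simp add: green_sol_d1_def algebra_simps)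

lemma has_real_derivative_green_sol_d1:
  "(green_sol_d1 m G has_real_derivative
     G s - (m - 1) * tau m s * green_sol_d1 m G s - m * (m + 1) * (1 - tau m s ^ 2) * green_sol m G s) (at s)"
proof -
  let ?A = "forcing_tail m (\<lambda>x. G (- x)) (- s)" and ?B = "forcing_tail m G s"
    and ?W = "m * sech_pow_integral m" and ?f = "cosh_pow m s * G s"
  have derivative: "(green_sol_d1 m G has_real_derivative
      (hom_sol_d1 m s * (hom_sol m (- s) * cosh_pow m s * G s) + hom_sol_d2 m s * ?A
        - (hom_sol_d1 m (- s) * (- (hom_sol m s * cosh_pow m s * G s)) + (- hom_sol_d2 m (- s)) * ?B))
      / ?W) (at s)"
    unfolding green_sol_d1_def[abs_def]
    by (rule DERIV_cdivide DERIV_diff DERIV_mult' has_real_derivative_hom_sol_d1[OF m]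
        has_real_derivative_hom_sol_d1_reflect[OF m] has_real_derivative_forcing_tail_reflect
        forcing_tail_facts(1))+
  have "(hom_sol_d1 m s * (hom_sol m (- s) * cosh_pow m s * G s) + hom_sol_d2 m s * ?A
        - (hom_sol_d1 m (- s) * (- (hom_sol m s * cosh_pow m s * G s)) + (- hom_sol_d2 m (- s)) * ?B)) / ?W
      = ?f * (hom_sol m (- s) * hom_sol_d1 m s + hom_sol_d1 m (- s) * hom_sol m s) / ?W
        + (hom_sol_d2 m s * ?A + hom_sol_d2 m (- s) * ?B) / ?W"
    by (simp add: algebra_simps add_divide_distrib)
  also have "\<dots> = G s + (hom_sol_d2 m s * ?A + hom_sol_d2 m (- s) * ?B) / ?W"
    unfolding hom_sol_wronskian[OF m]
    using m sech_pow_integral_pos[OF m] cosh_pow_mult_sech_pow[of m s] by (simp add: field_simps)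
  also have "\<dots> = G s - (m - 1) * tau m s * green_sol_d1 m G s
      - m * (m + 1) * (1 - tau m s ^ 2) * green_sol m G s"
    unfolding hom_sol_d2_combination[OF m] green_sol_def green_sol_d1_def
    by (simp add: diff_divide_distrib right_diff_distrib)
  finally show ?thesis
    using derivative by (rule DERIV_cong[rotated])
qed

end

section \<open>Uniqueness of decaying solutions\<close>

lemma tendsto_zero_if_exp_bound:
  fixes f :: "real \<Rightarrow> real"
  assumes c: "c > 0" and bound: "\<And>x. x \<ge> 0 \<Longrightarrow> \<bar>f x\<bar> \<le> C * exp (- c * x)"
  shows "(f \<longlongrightarrow> 0) at_top"
proof (rule Lim_null_comparison)
  show "\<forall>\<^sub>F x in at_top. norm (f x) \<le> C * exp (- c * x)"
    using eventually_ge_at_top[of 0] by eventually_elim (use bound in auto)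
  have "LIM s at_top. - (c * s) :> at_bot"
    using filterlim_tendsto_pos_mult_at_top[OF tendsto_const c filterlim_ident]
    by (simp add: filterlim_uminus_at_top)
  then show "((\<lambda>x. C * exp (- c * x)) \<longlongrightarrow> 0) at_top"
    using tendsto_mult_right_zero[OF filterlim_compose[OF exp_at_bot]] by simp
qed

lemma tau_tendsto_1: "m > 0 \<Longrightarrow> (tau m \<longlongrightarrow> 1) at_top"
  unfolding tau_def[abs_def]
  by (rule filterlim_compose[OF tanh_real_at_top
        filterlim_tendsto_pos_mult_at_top[OF tendsto_const _ filterlim_ident]])

context
  fixes m :: real
  assumes m: "m > 1"
begin

lemma hom_sol_tendsto_0: "(hom_sol m \<longlongrightarrow> 0) at_top"
proof (rule tendsto_zero_if_exp_bound)
  show "\<bar>hom_sol m x\<bar> \<le> hom_sol_const m * exp (- (m - 1) * x)" if "x \<ge> 0" for x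
    using abs_hom_sol_le[OF m, of x] that by (simp add: right_decay_def)
qed (use m in simp)

lemma hom_sol_reflect_tendsto: "((\<lambda>s. hom_sol m (- s)) \<longlongrightarrow> sech_pow_integral m) at_top"
proof -
  have "hom_sol m (- s) = tau m s * (sech_pow_integral m - sech_pow_tail m s) - sech_pow m s" for s
  proof -
    have "sech_pow_tail m (- s) = sech_pow_integral m - sech_pow_tail m s"
      using sech_pow_tail_add_minus[OF m, of s] by simp
    then show ?thesis
      unfolding hom_sol_def by simp
  qed
  moreover have "(sech_pow_tail m \<longlongrightarrow> 0) at_top"
    using m sech_pow_tail_le_exp[OF m] sech_pow_tail_nonneg[OF m]
    by (intro tendsto_zero_if_exp_bound[of "m - 1" _ "2 / (m - 1)"]) auto
  moreover have "(sech_pow m \<longlongrightarrow> 0) at_top"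
    by (rule tendsto_zero_if_exp_bound[OF _ abs_sech_pow_le_exp[OF m]]) (use m in simp)
  ultimately show ?thesis
    using tau_tendsto_1[of m] m
    by (auto intro!: tendsto_eq_intros)
qed

lemma cosh_pow_wronskian_const:
  assumes u: "\<And>s. (u has_real_derivative u1 s) (at s)" "\<And>s. (u1 has_real_derivative u2 s) (at s)"
    and u_ode: "\<And>s. u2 s + (m - 1) * tau m s * u1 s + m * (m + 1) * (1 - tau m s ^ 2) * u s = 0"
    and y: "\<And>s. (y has_real_derivative y1 s) (at s)" "\<And>s. (y1 has_real_derivative y2 s) (at s)"
    and y_ode: "\<And>s. y2 s + (m - 1) * tau m s * y1 s + m * (m + 1) * (1 - tau m s ^ 2) * y s = 0"
  shows "cosh_pow m s * (u s * y1 s - u1 s * y s) = cosh_pow m 0 * (u 0 * y1 0 - u1 0 * y 0)"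
proof -
  have "((\<lambda>s. cosh_pow m s * (u s * y1 s - u1 s * y s)) has_real_derivative 0) (at x)" for x
  proof -
    have "((\<lambda>s. cosh_pow m s * (u s * y1 s - u1 s * y s)) has_real_derivative
        cosh_pow m x * (u x * y2 x + u1 x * y1 x - (u1 x * y1 x + u2 x * y x))
        + (m - 1) * tau m x * cosh_pow m x * (u x * y1 x - u1 x * y x)) (at x)"
      by (rule DERIV_mult' DERIV_diff has_real_derivative_cosh_pow u y)+
    moreover have "u2 x = - (m - 1) * tau m x * u1 x - m * (m + 1) * (1 - tau m x ^ 2) * u x"
      and "y2 x = - (m - 1) * tau m x * y1 x - m * (m + 1) * (1 - tau m x ^ 2) * y x"
      using u_ode[of x] y_ode[of x] by linarith+
    ultimately show ?thesis
      by (simp add: algebra_simps)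
  qed
  from DERIV_isconst_all[OF allI[OF this]] show ?thesis
    by blast
qed

text \<open>Both Wronskians with \<open>hom_sol m\<close> and its reflection are constant; the limits at
  \<open>+\<infinity>\<close> and \<open>-\<infinity>\<close> force both constants to vanish, and together they determine \<open>u\<close>.\<close>
lemma homogeneous_solution_eq_0:
  assumes u: "\<And>s. (u has_real_derivative u1 s) (at s)" "\<And>s. (u1 has_real_derivative u2 s) (at s)"
    and u_ode: "\<And>s. u2 s + (m - 1) * tau m s * u1 s + m * (m + 1) * (1 - tau m s ^ 2) * u s = 0"
    and lim_top: "(u \<longlongrightarrow> 0) at_top" and lim_bot: "((\<lambda>s. u (- s)) \<longlongrightarrow> 0) at_top"
  shows "u s = 0"
proof -
  define a where "a = cosh_pow m 0 * (u 0 * hom_sol_d1 m 0 - u1 0 * hom_sol m 0)"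
  define b where "b = cosh_pow m 0 * (u 0 * (- hom_sol_d1 m (- 0)) - u1 0 * hom_sol m (- 0))"
  have wa: "cosh_pow m s * (u s * hom_sol_d1 m s - u1 s * hom_sol m s) = a" for s
    unfolding a_def
    by (rule cosh_pow_wronskian_const[OF u u_ode has_real_derivative_hom_sol[OF m]
          has_real_derivative_hom_sol_d1[OF m] hom_sol_ode[OF m]])
  have wb: "cosh_pow m s * (u s * (- hom_sol_d1 m (- s)) - u1 s * hom_sol m (- s)) = b" for s
    unfolding b_def
    using DERIV_minus[OF has_real_derivative_hom_sol_d1_reflect[OF m]]
    by (intro cosh_pow_wronskian_const[OF u u_ode has_real_derivative_hom_sol_reflect[OF m] _
          hom_sol_reflect_ode[OF m]]) auto
  have u_eq: "m * sech_pow_integral m * u s = a * hom_sol m (- s) - b * hom_sol m s" for s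
  proof -
    have "a * hom_sol m (- s) - b * hom_sol m s = cosh_pow m s * u s
        * (hom_sol m (- s) * hom_sol_d1 m s + hom_sol_d1 m (- s) * hom_sol m s)"
      unfolding wa[of s, symmetric] wb[of s, symmetric] by (simp add: algebra_simps)
    then show ?thesis
      unfolding hom_sol_wronskian[OF m] using cosh_pow_mult_sech_pow[of m s]
      by (simp add: algebra_simps)
  qed
  have "((\<lambda>s. m * sech_pow_integral m * u s) \<longlongrightarrow> a * sech_pow_integral m - b * 0) at_top"
    unfolding u_eq by (intro tendsto_intros hom_sol_reflect_tendsto hom_sol_tendsto_0)
  with tendsto_mult_right_zero[OF lim_top] have "a * sech_pow_integral m = 0"
    using tendsto_unique[OF trivial_limit_at_top_linorder] by fastforce
  moreover have "((\<lambda>s. m * sech_pow_integral m * u (- s)) \<longlongrightarrow> a * 0 - b * sech_pow_integral m) at_top"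
    unfolding u_eq by (simp only: minus_minus) (intro tendsto_intros hom_sol_reflect_tendsto hom_sol_tendsto_0)
  with tendsto_mult_right_zero[OF lim_bot] have "b * sech_pow_integral m = 0"
    using tendsto_unique[OF trivial_limit_at_top_linorder] by fastforce
  ultimately show ?thesis
    using u_eq[of s] sech_pow_integral_pos[OF m] m by simp
qed

end

section \<open>Differential operators with coefficients polynomial in \<open>\<tau>\<close>\<close>

definition tau_diff_op :: "real \<Rightarrow> (nat \<Rightarrow> real poly) \<Rightarrow> nat \<Rightarrow> (real \<Rightarrow> real) \<Rightarrow> real \<Rightarrow> real" where
  "tau_diff_op m C N h s = (\<Sum>i\<le>N. poly (C i) (tau m s) * (deriv ^^ i) h s)"

text \<open>Leibniz rule for \<open>tau_diff_op\<close>; \<open>[:m, 0, - m:]\<close> is \<open>\<tau>' = m (1 - \<tau>\<^sup>2)\<close> as a polynomial in \<open>\<tau>\<close>.\<close>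
definition deriv_coeffs :: "real \<Rightarrow> (nat \<Rightarrow> real poly) \<Rightarrow> nat \<Rightarrow> real poly" where
  "deriv_coeffs m C i = pderiv (C i) * [:m, 0, - m:] + (case i of 0 \<Rightarrow> 0 | Suc j \<Rightarrow> C j)"

lemma deriv_coeffs_iter_vanish:
  "(\<forall>i>N. C i = 0) \<Longrightarrow> \<forall>i>N + a. (deriv_coeffs m ^^ a) C i = 0"
proof (induction a)
  case (Suc a)
  then show ?case
    by (auto simp: deriv_coeffs_def split: nat.split)
qed simp

lemma has_real_derivative_tau_diff_op:
  fixes h :: "real \<Rightarrow> real"
  assumes vanish: "\<forall>i>N. C i = 0"
    and h: "\<And>i x. i \<le> N \<Longrightarrow> ((deriv ^^ i) h has_real_derivative (deriv ^^ Suc i) h x) (at x)"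
  shows "(tau_diff_op m C N h has_real_derivative tau_diff_op m (deriv_coeffs m C) (Suc N) h x) (at x)"
proof -
  have derivative: "(tau_diff_op m C N h has_real_derivative
      (\<Sum>i\<le>N. poly (C i) (tau m x) * (deriv ^^ Suc i) h x
        + poly (pderiv (C i)) (tau m x) * (m * (1 - tau m x ^ 2)) * (deriv ^^ i) h x)) (at x)"
    unfolding tau_diff_op_def[abs_def]
    by (rule DERIV_sum, rule DERIV_mult'[OF DERIV_chain2[OF poly_DERIV has_real_derivative_tau] h]) simp
  have from_pderiv: "(\<Sum>i\<le>Suc N. poly (pderiv (C i) * [:m, 0, - m:]) (tau m x) * (deriv ^^ i) h x)
      = (\<Sum>i\<le>N. poly (pderiv (C i)) (tau m x) * (m * (1 - tau m x ^ 2)) * (deriv ^^ i) h x)"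
    using vanish by (simp add: algebra_simps power2_eq_square)
  have from_shift: "(\<Sum>i\<le>Suc N. poly (case i of 0 \<Rightarrow> 0 | Suc j \<Rightarrow> C j) (tau m x) * (deriv ^^ i) h x)
      = (\<Sum>i\<le>N. poly (C i) (tau m x) * (deriv ^^ Suc i) h x)"
    by (subst sum.atMost_Suc_shift) simp
  have "tau_diff_op m (deriv_coeffs m C) (Suc N) h x
      = (\<Sum>i\<le>Suc N. poly (pderiv (C i) * [:m, 0, - m:]) (tau m x) * (deriv ^^ i) h x)
        + (\<Sum>i\<le>Suc N. poly (case i of 0 \<Rightarrow> 0 | Suc j \<Rightarrow> C j) (tau m x) * (deriv ^^ i) h x)"
    unfolding tau_diff_op_def deriv_coeffs_def poly_add distrib_right sum.distrib ..
  also have "\<dots> = (\<Sum>i\<le>N. poly (C i) (tau m x) * (deriv ^^ Suc i) h x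
        + poly (pderiv (C i)) (tau m x) * (m * (1 - tau m x ^ 2)) * (deriv ^^ i) h x)"
    unfolding from_pderiv from_shift by (simp add: sum.distrib)
  finally show ?thesis
    using derivative by simp
qed

definition coeff_abs_sum :: "real poly \<Rightarrow> real" where
  "coeff_abs_sum P = (\<Sum>i\<le>degree P. \<bar>coeff P i\<bar>)"

lemma abs_poly_le_coeff_abs_sum:
  assumes "\<bar>x\<bar> \<le> 1"
  shows "\<bar>poly P x\<bar> \<le> coeff_abs_sum P"
proof -
  have "\<bar>poly P x\<bar> \<le> (\<Sum>i\<le>degree P. \<bar>coeff P i * x ^ i\<bar>)"
    unfolding poly_altdef by (rule sum_abs)
  also have "\<dots> \<le> (\<Sum>i\<le>degree P. \<bar>coeff P i\<bar>)"
    using assms by (intro sum_mono) (simp add: abs_mult power_abs mult_left_le power_le_one)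
  finally show ?thesis
    unfolding coeff_abs_sum_def .
qed

lemma coeff_abs_sum_nonneg: "coeff_abs_sum P \<ge> 0"
  unfolding coeff_abs_sum_def by (simp add: sum_nonneg)

lemma abs_tau_diff_op_le:
  assumes "\<And>i. i \<le> N \<Longrightarrow> \<bar>(deriv ^^ i) h s\<bar> * w \<le> M" "w \<ge> 0"
  shows "\<bar>tau_diff_op m C N h s\<bar> * w \<le> (\<Sum>i\<le>N. coeff_abs_sum (C i)) * M"
proof -
  have "\<bar>tau_diff_op m C N h s\<bar> * w \<le> (\<Sum>i\<le>N. \<bar>poly (C i) (tau m s) * (deriv ^^ i) h s\<bar>) * w"
    unfolding tau_diff_op_def using assms(2) by (intro mult_right_mono sum_abs) auto
  also have "\<dots> = (\<Sum>i\<le>N. \<bar>poly (C i) (tau m s)\<bar> * (\<bar>(deriv ^^ i) h s\<bar> * w))"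
    by (simp add: sum_distrib_right abs_mult mult.assoc)
  also have "\<dots> \<le> (\<Sum>i\<le>N. coeff_abs_sum (C i) * M)"
    using assms abs_poly_le_coeff_abs_sum[OF abs_tau_le_1] coeff_abs_sum_nonneg
    by (intro sum_mono mult_mono) auto
  finally show ?thesis
    by (simp add: sum_distrib_right)
qed

lemma continuous_on_tau_diff_op:
  assumes "\<And>i. i \<le> N \<Longrightarrow> continuous_on UNIV ((deriv ^^ i) h)"
  shows "continuous_on UNIV (tau_diff_op m C N h)"
  unfolding tau_diff_op_def[abs_def]
proof (intro continuous_on_sum continuous_on_mult)
  fix i assume "i \<in> {..N}"
  then show "continuous_on UNIV ((deriv ^^ i) h)"
    using assms by auto
  show "continuous_on UNIV (\<lambda>s. poly (C i) (tau m s))"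
    by (rule continuous_on_compose2[OF continuous_on_poly[OF continuous_on_id] continuous_on_tau]) auto
qed

section \<open>The operator \<open>T\<^sub>0\<close> and the weight \<open>\<phi>\<^sup>-\<^sup>q\<close>\<close>

lemma phi_pos: "phi n s > 0"
  unfolding phi_def by simp

lemma has_real_derivative_phi:
  assumes "n \<ge> 2"
  shows "(phi n has_real_derivative phi n s * tau (real (n - 1)) s) (at s)"
proof -
  have "1 / real (n - 1) * real (n - 1) = 1"
    using assms by simp
  with has_real_derivative_cosh_powr[of "real (n - 1)" "1 / real (n - 1)" s] show ?thesis
    unfolding phi_def[abs_def] by (simp add: mult.commute)
qed

lemma phi_power_2n_minus_2:
  assumes "n \<ge> 2"
  shows "phi n s ^ (2 * n - 2) = cosh (real (n - 1) * s) ^ 2"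
proof -
  have "phi n s ^ (2 * n - 2) = cosh (real (n - 1) * s) powr (1 / real (n - 1) * real (2 * n - 2))"
    using phi_pos[of n s] by (simp add: powr_realpow[symmetric] phi_def powr_powr)
  also have "1 / real (n - 1) * real (2 * n - 2) = real (2 :: nat)"
    using assms by (simp add: of_nat_diff field_simps)
  finally show ?thesis
    by (simp add: powr_realpow)
qed

lemma inverse_cosh_square: "1 / cosh (x :: real) ^ 2 = 1 - tanh x ^ 2"
proof -
  have "1 - tanh x ^ 2 = (cosh x ^ 2 - sinh x ^ 2) / cosh x ^ 2"
    unfolding tanh_def by (simp add: power_divide diff_divide_distrib)
  then show ?thesis
    using hyperbolic_pythagoras[of x] by simp
qed

definition T0_lower_coeffs :: "real \<Rightarrow> nat \<Rightarrow> real poly" where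
  "T0_lower_coeffs m i =
     (if i = 0 then [:m * (m + 1), 0, - (m * (m + 1)):] else if i = 1 then [:0, m - 1:] else 0)"

definition T0_coeffs :: "real \<Rightarrow> nat \<Rightarrow> real poly" where
  "T0_coeffs m = (T0_lower_coeffs m)(2 := 1)"

lemma T0_lower_coeffs_vanish: "\<forall>i>1. T0_lower_coeffs m i = 0"
  unfolding T0_lower_coeffs_def by auto

lemma T0_coeffs_vanish: "\<forall>i>2. T0_coeffs m i = 0"
  unfolding T0_coeffs_def T0_lower_coeffs_def by auto

lemma deriv_coeffs_iter_T0_coeffs_vanish: "\<forall>i>a + 2. (deriv_coeffs m ^^ a) (T0_coeffs m) i = 0"
  using deriv_coeffs_iter_vanish[OF T0_coeffs_vanish, of a] by (simp add: add.commute)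

lemma tau_diff_op_T0_lower_coeffs:
  "tau_diff_op m (T0_lower_coeffs m) 1 f s
     = (m - 1) * tau m s * deriv f s + m * (m + 1) * (1 - tau m s ^ 2) * f s"
  unfolding tau_diff_op_def T0_lower_coeffs_def by (simp add: algebra_simps power2_eq_square)

text \<open>With \<open>m = n - 1\<close>: \<open>\<phi>'/\<phi> = \<tau>\<close> and \<open>n (n - 1) / \<phi>\<^sup>2\<^sup>n\<^sup>-\<^sup>2 = m (m + 1) (1 - \<tau>\<^sup>2)\<close>.\<close>
lemma T0_eq:
  assumes "n \<ge> 3"
  shows "T0 n f s = (deriv ^^ 2) f s + tau_diff_op (real (n - 1)) (T0_lower_coeffs (real (n - 1))) 1 f s"
proof -
  let ?m = "real (n - 1)"
  have "deriv (phi n) s / phi n s = tau ?m s"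
    using assms DERIV_imp_deriv[OF has_real_derivative_phi] phi_pos[of n s] by simp
  moreover have "real n * ?m / phi n s ^ (2 * n - 2) = ?m * (?m + 1) * (1 - tau ?m s ^ 2)"
  proof -
    have "real n * ?m / phi n s ^ (2 * n - 2) = ?m * (?m + 1) * (1 / cosh (?m * s) ^ 2)"
      using assms phi_power_2n_minus_2[of n s] by (simp add: of_nat_diff)
    then show ?thesis
      unfolding inverse_cosh_square tau_def .
  qed
  moreover have "real (n - 2) = ?m - 1"
    using assms by (simp add: of_nat_diff)
  ultimately show ?thesis
    unfolding T0_def tau_diff_op_T0_lower_coeffs by simp
qed

lemma T0_eq_tau_diff_op:
  assumes "n \<ge> 3"
  shows "T0 n f = tau_diff_op (real (n - 1)) (T0_coeffs (real (n - 1))) 2 f"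
proof
  fix s
  show "T0 n f s = tau_diff_op (real (n - 1)) (T0_coeffs (real (n - 1))) 2 f s"
    unfolding T0_eq[OF assms] tau_diff_op_def T0_coeffs_def numeral_2_eq_2
    by (simp add: T0_lower_coeffs_def)
qed

lemma phi_powr_le_exp:
  assumes "n \<ge> 2" "p \<ge> 0"
  shows "phi n s powr p \<le> exp (p * \<bar>s\<bar>)"
  using assms cosh_powr_le_exp[of "real (n - 1)" "p / real (n - 1)" s]
  unfolding phi_def by (simp add: powr_powr)

lemma exp_le_phi_powr:
  assumes "n \<ge> 2" "p \<ge> 0" "p \<le> real (n - 1)"
  shows "exp (p * \<bar>s\<bar>) / 2 \<le> phi n s powr p"
  using assms exp_le_cosh_powr[of "real (n - 1)" "p / real (n - 1)" s]
  unfolding phi_def by (simp add: powr_powr)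

lemma Ck_has_real_derivative:
  assumes "Ck k f" "i < k"
  shows "((deriv ^^ i) f has_real_derivative (deriv ^^ Suc i) f x) (at x)"
proof -
  have "(deriv ^^ i) f differentiable at x"
    using assms differentiable_onD[of "(deriv ^^ i) f" UNIV x] unfolding Ck_def by simp
  then show ?thesis
    by (simp add: DERIV_deriv_iff_real_differentiable)
qed

lemma Ck_continuous_on:
  assumes "Ck k f" "i \<le> k"
  shows "continuous_on UNIV ((deriv ^^ i) f)"
proof (cases "i = k")
  case False
  then have "(deriv ^^ i) f differentiable_on UNIV"
    using assms unfolding Ck_def by simp
  then show ?thesis
    by (rule differentiable_imp_continuous_on)
qed (use assms in \<open>simp add: Ck_def\<close>)

lemma CkI:
  assumes "\<And>i x. i < k \<Longrightarrow> ((deriv ^^ i) f has_real_derivative (deriv ^^ Suc i) f x) (at x)"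
    and "continuous_on UNIV ((deriv ^^ k) f)"
  shows "Ck k f"
proof -
  have "(deriv ^^ i) f differentiable_on UNIV" if "i < k" for i
    using assms(1)[OF that] real_differentiable_def
    by (intro differentiable_at_imp_differentiable_on) blast
  then show ?thesis
    unfolding Ck_def using assms(2) by blast
qed

lemma Cspace_imp_Ck: "f \<in> Cspace n k q \<Longrightarrow> Ck k f"
  unfolding Cspace_def by blast

lemma Cspace_weighted_le_Cnorm:
  assumes f: "f \<in> Cspace n k q" and i: "i \<le> k"
  shows "\<bar>(deriv ^^ i) f s\<bar> * phi n s powr (- q) \<le> Cnorm n k q f"
proof -
  have bdd: "bdd_above (range (\<lambda>s. \<bar>(deriv ^^ a) f s\<bar> * phi n s powr (- q)))" if "a \<le> k" for a
    using f that by (simp add: Cspace_def)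
  have sup_nonneg: "(SUP s. \<bar>(deriv ^^ a) f s\<bar> * phi n s powr (- q)) \<ge> 0" if "a \<le> k" for a
  proof -
    have "0 \<le> \<bar>(deriv ^^ a) f 0\<bar> * phi n 0 powr (- q)"
      by simp
    also have "\<dots> \<le> (SUP s. \<bar>(deriv ^^ a) f s\<bar> * phi n s powr (- q))"
      by (rule cSUP_upper[OF _ bdd[OF that]]) simp
    finally show ?thesis .
  qed
  have "\<bar>(deriv ^^ i) f s\<bar> * phi n s powr (- q) \<le> (SUP s. \<bar>(deriv ^^ i) f s\<bar> * phi n s powr (- q))"
    by (rule cSUP_upper[OF _ bdd[OF i]]) simp
  also have "\<dots> \<le> Cnorm n k q f"
    unfolding Cnorm_def
    by (rule member_le_sum[of i "{..k}" "\<lambda>a. SUP s. \<bar>(deriv ^^ a) f s\<bar> * phi n s powr (- q)"])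
       (use i sup_nonneg in auto)
  finally show ?thesis .
qed

lemma Cnorm_nonneg:
  assumes "f \<in> Cspace n k q"
  shows "Cnorm n k q f \<ge> 0"
proof -
  have "0 \<le> \<bar>(deriv ^^ 0) f 0\<bar> * phi n 0 powr (- q)"
    by simp
  also have "\<dots> \<le> Cnorm n k q f"
    by (rule Cspace_weighted_le_Cnorm[OF assms]) simp
  finally show ?thesis .
qed

lemma Cspace_Cnorm_le:
  assumes "Ck k f" and bound: "\<And>a s. a \<le> k \<Longrightarrow> \<bar>(deriv ^^ a) f s\<bar> * phi n s powr (- q) \<le> B a"
  shows "f \<in> Cspace n k q" "Cnorm n k q f \<le> (\<Sum>a\<le>k. B a)"
proof -
  have "bdd_above (range (\<lambda>s. \<bar>(deriv ^^ a) f s\<bar> * phi n s powr (- q)))" if "a \<le> k" for a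
    using bound[OF that] by (intro bdd_aboveI2) blast
  then show "f \<in> Cspace n k q"
    unfolding Cspace_def using assms(1) by blast
  show "Cnorm n k q f \<le> (\<Sum>a\<le>k. B a)"
    unfolding Cnorm_def using bound by (intro sum_mono cSUP_least) auto
qed

lemma Cspace_abs_le_exp:
  assumes f: "f \<in> Cspace n k q" and n: "n \<ge> 2" and q: "q \<le> 0" "- q \<le> real (n - 1)"
  shows "\<bar>f x\<bar> \<le> 2 * Cnorm n k q f * exp (q * \<bar>x\<bar>)"
proof -
  have "\<bar>f x\<bar> * (exp (- q * \<bar>x\<bar>) / 2) \<le> \<bar>f x\<bar> * phi n x powr (- q)"
    using exp_le_phi_powr[of n "- q" x] n q by (intro mult_left_mono) auto
  also have "\<dots> \<le> Cnorm n k q f"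
    using Cspace_weighted_le_Cnorm[OF f, of 0 x] by simp
  finally have "\<bar>f x\<bar> * exp (- q * \<bar>x\<bar>) \<le> 2 * Cnorm n k q f"
    by simp
  then show ?thesis
    by (simp add: exp_minus field_simps)
qed

lemma weighted_le_if_exp_bound:
  assumes "n \<ge> 2" "q \<le> 0" "\<bar>X\<bar> \<le> Y * exp (q * \<bar>s\<bar>)"
  shows "\<bar>X\<bar> * phi n s powr (- q) \<le> Y"
proof -
  have "\<bar>X\<bar> * phi n s powr (- q) \<le> (Y * exp (q * \<bar>s\<bar>)) * exp (- q * \<bar>s\<bar>)"
    using assms phi_powr_le_exp[of n "- q" s] by (intro mult_mono) (auto intro: order_trans[OF abs_ge_zero])
  also have "\<dots> = Y"
    by (simp add: mult.assoc mult_exp_exp)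
  finally show ?thesis .
qed

lemma Cspace_tendsto_0:
  assumes f: "f \<in> Cspace n k q" and n: "n \<ge> 2" and q: "q < 0" "- q \<le> real (n - 1)"
  shows "(f \<longlongrightarrow> 0) at_top" "((\<lambda>s. f (- s)) \<longlongrightarrow> 0) at_top"
proof -
  have bound: "\<bar>f x\<bar> \<le> 2 * Cnorm n k q f * exp (- (- q) * x)"
    and bound_reflect: "\<bar>f (- x)\<bar> \<le> 2 * Cnorm n k q f * exp (- (- q) * x)" if "x \<ge> 0" for x
    using Cspace_abs_le_exp[OF f n q(1)[THEN less_imp_le] q(2), of x]
      Cspace_abs_le_exp[OF f n q(1)[THEN less_imp_le] q(2), of "- x"] that
    by simp_all
  have "- q > 0"
    using q by simp
  then show "(f \<longlongrightarrow> 0) at_top" "((\<lambda>s. f (- s)) \<longlongrightarrow> 0) at_top"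
    using tendsto_zero_if_exp_bound[OF _ bound] tendsto_zero_if_exp_bound[OF _ bound_reflect] by auto
qed

section \<open>Boundedness and injectivity of \<open>T\<^sub>0\<close>\<close>

lemma deriv_iter_T0:
  assumes n: "n \<ge> 3" and f: "Ck k f" and a: "a + 2 \<le> k"
  shows "(deriv ^^ a) (T0 n f)
    = tau_diff_op (real (n - 1)) ((deriv_coeffs (real (n - 1)) ^^ a) (T0_coeffs (real (n - 1)))) (a + 2) f"
  using a
proof (induction a)
  case 0
  show ?case
    using T0_eq_tau_diff_op[OF n] by (simp add: numeral_2_eq_2)
next
  case (Suc a)
  let ?m = "real (n - 1)"
  have "\<forall>i>a + 2. (deriv_coeffs ?m ^^ a) (T0_coeffs ?m) i = 0"
    by (rule deriv_coeffs_iter_T0_coeffs_vanish)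
  moreover have "\<And>i x. i \<le> a + 2 \<Longrightarrow> ((deriv ^^ i) f has_real_derivative (deriv ^^ Suc i) f x) (at x)"
    using Suc.prems by (intro Ck_has_real_derivative[OF f]) auto
  ultimately have "deriv ((deriv ^^ a) (T0 n f)) x
      = tau_diff_op ?m ((deriv_coeffs ?m ^^ Suc a) (T0_coeffs ?m)) (Suc a + 2) f x" for x
    using Suc by (simp add: DERIV_imp_deriv[OF has_real_derivative_tau_diff_op])
  then show ?case
    by auto
qed

definition T0_bound :: "nat \<Rightarrow> nat \<Rightarrow> real" where
  "T0_bound n k = (\<Sum>a\<le>k - 2. \<Sum>i\<le>a + 2.
     coeff_abs_sum ((deriv_coeffs (real (n - 1)) ^^ a) (T0_coeffs (real (n - 1))) i))"

context
  fixes n k :: nat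
  assumes n: "n \<ge> 3" and k: "k \<ge> 2"
begin

lemma T0_Cspace_Cnorm_le:
  assumes f: "f \<in> Cspace n k q"
  shows "T0 n f \<in> Cspace n (k - 2) q" "Cnorm n (k - 2) q (T0 n f) \<le> T0_bound n k * Cnorm n k q f"
proof -
  let ?m = "real (n - 1)"
  have Ck_f: "Ck k f"
    using f by (rule Cspace_imp_Ck)
  have Ck_T0: "Ck (k - 2) (T0 n f)"
  proof (rule CkI)
    show "((deriv ^^ a) (T0 n f) has_real_derivative (deriv ^^ Suc a) (T0 n f) x) (at x)"
      if "a < k - 2" for a x
      using that k deriv_iter_T0[OF n Ck_f, of a] deriv_iter_T0[OF n Ck_f, of "Suc a"]
        has_real_derivative_tau_diff_op[OF deriv_coeffs_iter_T0_coeffs_vanish Ck_has_real_derivative[OF Ck_f]]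
      by simp
    show "continuous_on UNIV ((deriv ^^ (k - 2)) (T0 n f))"
      using k deriv_iter_T0[OF n Ck_f, of "k - 2"] Ck_continuous_on[OF Ck_f]
      by (simp add: continuous_on_tau_diff_op)
  qed
  have bound: "\<bar>(deriv ^^ a) (T0 n f) s\<bar> * phi n s powr (- q)
      \<le> (\<Sum>i\<le>a + 2. coeff_abs_sum ((deriv_coeffs ?m ^^ a) (T0_coeffs ?m) i)) * Cnorm n k q f"
    if "a \<le> k - 2" for a s
  proof -
    have "a + 2 \<le> k"
      using that k by simp
    have "\<bar>tau_diff_op ?m ((deriv_coeffs ?m ^^ a) (T0_coeffs ?m)) (a + 2) f s\<bar> * phi n s powr (- q)
      \<le> (\<Sum>i\<le>a + 2. coeff_abs_sum ((deriv_coeffs ?m ^^ a) (T0_coeffs ?m) i)) * Cnorm n k q f"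
      by (rule abs_tau_diff_op_le) (use Cspace_weighted_le_Cnorm[OF f] \<open>a + 2 \<le> k\<close> in auto)
    with deriv_iter_T0[OF n Ck_f \<open>a + 2 \<le> k\<close>] show ?thesis
      by simp
  qed
  show "T0 n f \<in> Cspace n (k - 2) q"
    by (rule Cspace_Cnorm_le(1)[OF Ck_T0 bound])
  show "Cnorm n (k - 2) q (T0 n f) \<le> T0_bound n k * Cnorm n k q f"
    using Cspace_Cnorm_le(2)[OF Ck_T0 bound] unfolding T0_bound_def by (simp add: sum_distrib_right)
qed

end

lemma T0_inj_on:
  assumes n: "n \<ge> 3" and k: "k \<ge> 2" and q: "- real (n - 2) < q" "q < 0"
  shows "inj_on (T0 n) (Cspace n k q)"
proof (rule inj_onI)
  fix f g assume f: "f \<in> Cspace n k q" and g: "g \<in> Cspace n k q" and eq: "T0 n f = T0 n g"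
  let ?m = "real (n - 1)"
  have deriv0: "(h has_real_derivative deriv h s) (at s)"
    and deriv1: "(deriv h has_real_derivative deriv (deriv h) s) (at s)" if "h \<in> Cspace n k q" for h s
    using Ck_has_real_derivative[OF Cspace_imp_Ck[OF that], of 0]
      Ck_has_real_derivative[OF Cspace_imp_Ck[OF that], of 1] k
    by auto
  have ode: "deriv (deriv f) s - deriv (deriv g) s + (?m - 1) * tau ?m s * (deriv f s - deriv g s)
      + ?m * (?m + 1) * (1 - tau ?m s ^ 2) * (f s - g s) = 0" for s
    using fun_cong[OF eq, of s] unfolding T0_eq[OF n] tau_diff_op_T0_lower_coeffs
    by (simp add: numeral_2_eq_2 algebra_simps)
  have "- q \<le> real (n - 1)"
    using q n by (simp add: of_nat_diff)
  then have decay: "(h \<longlongrightarrow> 0) at_top" "((\<lambda>s. h (- s)) \<longlongrightarrow> 0) at_top" if "h \<in> Cspace n k q" for h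
    using Cspace_tendsto_0[OF that] n q by auto
  have "f s - g s = 0" for s
  proof (rule homogeneous_solution_eq_0[of ?m "\<lambda>s. f s - g s" "\<lambda>s. deriv f s - deriv g s"
        "\<lambda>s. deriv (deriv f) s - deriv (deriv g) s"])
    show "((\<lambda>s. f s - g s) has_real_derivative deriv f s - deriv g s) (at s)"
      and "((\<lambda>s. deriv f s - deriv g s) has_real_derivative deriv (deriv f) s - deriv (deriv g) s) (at s)"
      for s by (intro DERIV_diff deriv0 deriv1 f g)+
    show "((\<lambda>s. f s - g s) \<longlongrightarrow> 0) at_top" "((\<lambda>s. f (- s) - g (- s)) \<longlongrightarrow> 0) at_top"
      using tendsto_diff[OF decay(1)[OF f] decay(1)[OF g]] tendsto_diff[OF decay(2)[OF f] decay(2)[OF g]]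
      by simp_all
  qed (use n ode in \<open>simp_all add: algebra_simps\<close>)
  then show "f = g"
    by auto
qed

section \<open>The inverse of \<open>T\<^sub>0\<close>\<close>

definition T0_inverse :: "nat \<Rightarrow> (real \<Rightarrow> real) \<Rightarrow> real \<Rightarrow> real" where
  "T0_inverse n g = green_sol (real (n - 1)) g"

context
  fixes n k :: nat and q :: real
  assumes n: "n \<ge> 3" and k: "k \<ge> 2" and q: "- real (n - 2) < q" "q < 0"
begin

lemma decay_rate: "real (n - 1) > 1" "0 < - q" "- q < real (n - 1) - 1"
  using n q by (auto simp: of_nat_diff)

lemma Cspace_exp_bound: "f \<in> Cspace n k' q \<Longrightarrow> \<bar>f x\<bar> \<le> 2 * Cnorm n k' q f * exp (- (- q) * \<bar>x\<bar>)"
  using Cspace_abs_le_exp[of f n k' q x] decay_rate n by simp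

context
  fixes g :: "real \<Rightarrow> real"
  assumes g: "g \<in> Cspace n (k - 2) q"
begin

lemmas green_sol_facts [folded T0_inverse_def] =
  has_real_derivative_green_sol[OF decay_rate Ck_continuous_on[OF Cspace_imp_Ck[OF g], of 0, simplified]
    Cspace_exp_bound[OF g]]
  has_real_derivative_green_sol_d1[OF decay_rate Ck_continuous_on[OF Cspace_imp_Ck[OF g], of 0, simplified]
    Cspace_exp_bound[OF g]]
  abs_green_sol_le[OF decay_rate Ck_continuous_on[OF Cspace_imp_Ck[OF g], of 0, simplified]
    Cspace_exp_bound[OF g]]
  abs_green_sol_d1_le[OF decay_rate Ck_continuous_on[OF Cspace_imp_Ck[OF g], of 0, simplified]
    Cspace_exp_bound[OF g]]

lemma deriv_T0_inverse: "deriv (T0_inverse n g) = green_sol_d1 (real (n - 1)) g"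
  using green_sol_facts(1) by (intro ext DERIV_imp_deriv)

lemma deriv2_T0_inverse: "(deriv ^^ 2) (T0_inverse n g)
    = (\<lambda>s. g s - tau_diff_op (real (n - 1)) (T0_lower_coeffs (real (n - 1))) 1 (T0_inverse n g) s)"
proof
  fix s
  have "(deriv ^^ 2) (T0_inverse n g) s = deriv (green_sol_d1 (real (n - 1)) g) s"
    by (simp add: numeral_2_eq_2 deriv_T0_inverse)
  also have "\<dots> = g s - tau_diff_op (real (n - 1)) (T0_lower_coeffs (real (n - 1))) 1 (T0_inverse n g) s"
    unfolding tau_diff_op_T0_lower_coeffs deriv_T0_inverse
    using DERIV_imp_deriv[OF green_sol_facts(2)] by (simp add: algebra_simps)
  finally show "(deriv ^^ 2) (T0_inverse n g) s
      = g s - tau_diff_op (real (n - 1)) (T0_lower_coeffs (real (n - 1))) 1 (T0_inverse n g) s" .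
qed

lemma T0_T0_inverse: "T0 n (T0_inverse n g) = g"
  using deriv2_T0_inverse by (simp add: T0_eq[OF n] fun_eq_iff)

lemma has_real_derivative_deriv_iter_T0_inverse_le_1:
  assumes "i \<le> 1"
  shows "((deriv ^^ i) (T0_inverse n g) has_real_derivative (deriv ^^ Suc i) (T0_inverse n g) x) (at x)"
proof -
  have "i = 0 \<or> i = 1"
    using assms by linarith
  then show ?thesis
  proof
    assume "i = 0"
    then show ?thesis
      using green_sol_facts(1)[of x] by (simp add: deriv_T0_inverse)
  next
    assume "i = 1"
    then show ?thesis
      using green_sol_facts(2)[of x] DERIV_imp_deriv[OF green_sol_facts(2)]
      by (simp add: deriv_T0_inverse)
  qed
qed

lemma deriv_iter_T0_inverse:
  assumes "j \<le> k - 2"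
  shows "(deriv ^^ (j + 2)) (T0_inverse n g) = (\<lambda>s. (deriv ^^ j) g s
      - tau_diff_op (real (n - 1)) ((deriv_coeffs (real (n - 1)) ^^ j) (T0_lower_coeffs (real (n - 1))))
          (j + 1) (T0_inverse n g) s)
    \<and> (\<forall>i\<le>j + 1. \<forall>x. ((deriv ^^ i) (T0_inverse n g) has_real_derivative
          (deriv ^^ Suc i) (T0_inverse n g) x) (at x))"
  using assms
proof (induction j)
  case 0
  from has_real_derivative_deriv_iter_T0_inverse_le_1
  show ?case
    using deriv2_T0_inverse by (simp add: numeral_2_eq_2)
next
  case (Suc j)
  let ?m = "real (n - 1)" and ?u = "T0_inverse n g"
  let ?C = "(deriv_coeffs ?m ^^ j) (T0_lower_coeffs ?m)"
  have IH_eq: "(deriv ^^ (j + 2)) ?u = (\<lambda>s. (deriv ^^ j) g s - tau_diff_op ?m ?C (j + 1) ?u s)"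
    and IH_deriv: "\<And>i x. i \<le> j + 1 \<Longrightarrow> ((deriv ^^ i) ?u has_real_derivative (deriv ^^ Suc i) ?u x) (at x)"
    using Suc by auto
  have vanish: "\<forall>i>j + 1. ?C i = 0"
    using deriv_coeffs_iter_vanish[OF T0_lower_coeffs_vanish, of j] by (simp add: add.commute)
  have top: "((deriv ^^ (j + 2)) ?u has_real_derivative
      (deriv ^^ Suc j) g x - tau_diff_op ?m (deriv_coeffs ?m ?C) (Suc (j + 1)) ?u x) (at x)" for x
    unfolding IH_eq
    using Suc.prems k
    by (intro DERIV_diff Ck_has_real_derivative[OF Cspace_imp_Ck[OF g]]
        has_real_derivative_tau_diff_op[OF vanish IH_deriv]) auto
  have top_eq: "(deriv ^^ Suc (j + 2)) ?u x
      = (deriv ^^ Suc j) g x - tau_diff_op ?m (deriv_coeffs ?m ?C) (Suc (j + 1)) ?u x" for x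
    using DERIV_imp_deriv[OF top[of x]] by simp
  have "((deriv ^^ i) ?u has_real_derivative (deriv ^^ Suc i) ?u x) (at x)" if "i \<le> Suc j + 1" for i x
  proof (cases "i \<le> j + 1")
    case False
    then have "i = j + 2"
      using that by simp
    then show ?thesis
      using top[of x] top_eq[of x] by simp
  qed (rule IH_deriv)
  moreover have "(deriv ^^ (Suc j + 2)) ?u
      = (\<lambda>s. (deriv ^^ Suc j) g s - tau_diff_op ?m (deriv_coeffs ?m ?C) (Suc j + 1) ?u s)"
    using top_eq by auto
  ultimately show ?case
    by simp
qed

lemma weighted_deriv_iter_T0_inverse_le:
  assumes j: "j \<le> k - 2"
    and lower: "\<And>i. i \<le> j + 1 \<Longrightarrow> \<bar>(deriv ^^ i) (T0_inverse n g) s\<bar> * phi n s powr (- q) \<le> M"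
  shows "\<bar>(deriv ^^ (j + 2)) (T0_inverse n g) s\<bar> * phi n s powr (- q)
    \<le> Cnorm n (k - 2) q g
      + (\<Sum>i\<le>j + 1. coeff_abs_sum ((deriv_coeffs (real (n - 1)) ^^ j) (T0_lower_coeffs (real (n - 1))) i)) * M"
proof -
  let ?m = "real (n - 1)" and ?w = "phi n s powr (- q)"
  let ?C = "(deriv_coeffs ?m ^^ j) (T0_lower_coeffs ?m)"
  have "\<bar>(deriv ^^ (j + 2)) (T0_inverse n g) s\<bar> * ?w
      \<le> (\<bar>(deriv ^^ j) g s\<bar> + \<bar>tau_diff_op ?m ?C (j + 1) (T0_inverse n g) s\<bar>) * ?w"
    unfolding conjunct1[OF deriv_iter_T0_inverse[OF j]]
    by (intro mult_right_mono abs_triangle_ineq4) simp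
  also have "\<dots> = \<bar>(deriv ^^ j) g s\<bar> * ?w + \<bar>tau_diff_op ?m ?C (j + 1) (T0_inverse n g) s\<bar> * ?w"
    by (simp add: distrib_right)
  also have "\<dots> \<le> Cnorm n (k - 2) q g + (\<Sum>i\<le>j + 1. coeff_abs_sum (?C i)) * M"
  proof (rule add_mono)
    show "\<bar>tau_diff_op ?m ?C (j + 1) (T0_inverse n g) s\<bar> * ?w \<le> (\<Sum>i\<le>j + 1. coeff_abs_sum (?C i)) * M"
      by (rule abs_tau_diff_op_le) (use lower in auto)
  qed (rule Cspace_weighted_le_Cnorm[OF g j])
  finally show ?thesis .
qed

lemma Ck_T0_inverse: "Ck k (T0_inverse n g)"
proof (rule CkI)
  have top: "(deriv ^^ (k - 2 + 2)) (T0_inverse n g) = (\<lambda>s. (deriv ^^ (k - 2)) g s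
      - tau_diff_op (real (n - 1)) ((deriv_coeffs (real (n - 1)) ^^ (k - 2)) (T0_lower_coeffs (real (n - 1))))
          (k - 2 + 1) (T0_inverse n g) s)"
    and derivs: "\<And>i x. i \<le> k - 2 + 1 \<Longrightarrow> ((deriv ^^ i) (T0_inverse n g) has_real_derivative
          (deriv ^^ Suc i) (T0_inverse n g) x) (at x)"
    using deriv_iter_T0_inverse[OF order_refl] by auto
  show "((deriv ^^ i) (T0_inverse n g) has_real_derivative (deriv ^^ Suc i) (T0_inverse n g) x) (at x)"
    if "i < k" for i x
    using derivs that k by simp
  have "continuous_on UNIV ((deriv ^^ i) (T0_inverse n g))" if "i \<le> k - 2 + 1" for i
    using derivs[OF that] by (meson DERIV_continuous continuous_at_imp_continuous_on)
  moreover have "k - 2 + 2 = k"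
    using k by simp
  ultimately show "continuous_on UNIV ((deriv ^^ k) (T0_inverse n g))"
    using top Ck_continuous_on[OF Cspace_imp_Ck[OF g], of "k - 2"]
    by (auto intro!: continuous_intros continuous_on_tau_diff_op)
qed
end

lemma T0_inverse_low_derivs_bound:
  assumes g: "g \<in> Cspace n (k - 2) q" and i: "i \<le> 1"
  shows "\<bar>(deriv ^^ i) (T0_inverse n g) s\<bar> * phi n s powr (- q)
    \<le> 2 * real (n - 1) * green_sol_const (real (n - 1)) (- q) * Cnorm n (k - 2) q g"
proof (rule weighted_le_if_exp_bound)
  let ?m = "real (n - 1)" and ?A = "green_sol_const (real (n - 1)) (- q)" and ?c = "Cnorm n (k - 2) q g"
  have "?A * ?c \<ge> 0"
    using green_sol_const_nonneg[OF decay_rate] Cnorm_nonneg[OF g] by simp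
  moreover have "2 \<le> 2 * ?m"
    using decay_rate by simp
  ultimately have "2 * (?A * ?c) \<le> 2 * ?m * (?A * ?c)"
    by (rule mult_right_mono[rotated])
  then have "2 * ?A * ?c \<le> 2 * ?m * ?A * ?c"
    by (simp add: mult.assoc)
  then have "2 * ?A * ?c * exp (q * \<bar>s\<bar>) \<le> 2 * ?m * ?A * ?c * exp (q * \<bar>s\<bar>)"
    by (rule mult_right_mono) simp
  moreover have "\<bar>T0_inverse n g s\<bar> \<le> 2 * ?A * ?c * exp (q * \<bar>s\<bar>)"
    using green_sol_facts(3)[OF g, of s] by (simp add: ac_simps)
  moreover have "\<bar>deriv (T0_inverse n g) s\<bar> \<le> 2 * ?m * ?A * ?c * exp (q * \<bar>s\<bar>)"
    using green_sol_facts(4)[OF g, of s] deriv_T0_inverse[OF g] by (simp add: ac_simps)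
  ultimately show "\<bar>(deriv ^^ i) (T0_inverse n g) s\<bar> \<le> 2 * ?m * ?A * ?c * exp (q * \<bar>s\<bar>)"
    using i by (cases i) auto
qed (use n q in auto)

lemma T0_inverse_derivs_bound:
  assumes "j \<le> k - 1"
  shows "\<exists>D. \<forall>g\<in>Cspace n (k - 2) q. \<forall>i\<le>j + 1. \<forall>s.
    \<bar>(deriv ^^ i) (T0_inverse n g) s\<bar> * phi n s powr (- q) \<le> D * Cnorm n (k - 2) q g"
  using assms
proof (induction j)
  case 0
  show ?case
    using T0_inverse_low_derivs_bound by auto
next
  case (Suc j)
  let ?m = "real (n - 1)"
  let ?C = "(deriv_coeffs ?m ^^ j) (T0_lower_coeffs ?m)"
  let ?P = "\<Sum>i\<le>j + 1. coeff_abs_sum (?C i)"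
  from Suc obtain D where D: "\<And>g i s. g \<in> Cspace n (k - 2) q \<Longrightarrow> i \<le> j + 1 \<Longrightarrow>
      \<bar>(deriv ^^ i) (T0_inverse n g) s\<bar> * phi n s powr (- q) \<le> D * Cnorm n (k - 2) q g"
    by auto
  have "\<bar>(deriv ^^ i) (T0_inverse n g) s\<bar> * phi n s powr (- q) \<le> max D (1 + ?P * D) * Cnorm n (k - 2) q g"
    if g: "g \<in> Cspace n (k - 2) q" and i: "i \<le> Suc j + 1" for g i s
  proof -
    let ?c = "Cnorm n (k - 2) q g" and ?w = "phi n s powr (- q)"
    have c: "?c \<ge> 0"
      by (rule Cnorm_nonneg[OF g])
    show ?thesis
    proof (cases "i \<le> j + 1")
      case True
      have "D * ?c \<le> max D (1 + ?P * D) * ?c"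
        using c by (intro mult_right_mono) auto
      with D[OF g True, of s] show ?thesis
        by linarith
    next
      case False
      then have "i = j + 2"
        using i by simp
      moreover have "j \<le> k - 2"
        using Suc.prems by simp
      ultimately have "\<bar>(deriv ^^ i) (T0_inverse n g) s\<bar> * ?w \<le> ?c + ?P * (D * ?c)"
        using weighted_deriv_iter_T0_inverse_le[OF g _ D[OF g]] by simp
      also have "\<dots> = (1 + ?P * D) * ?c"
        by (simp add: algebra_simps)
      also have "\<dots> \<le> max D (1 + ?P * D) * ?c"
        using c by (intro mult_right_mono) auto
      finally show ?thesis .
    qed
  qed
  then show ?case
    by blast
qed

lemma T0_inverse_Cspace_Cnorm_le:
  "\<exists>C. \<forall>g\<in>Cspace n (k - 2) q. T0_inverse n g \<in> Cspace n k q
     \<and> Cnorm n k q (T0_inverse n g) \<le> C * Cnorm n (k - 2) q g"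
proof -
  obtain D where D: "\<And>g i s. g \<in> Cspace n (k - 2) q \<Longrightarrow> i \<le> k \<Longrightarrow>
      \<bar>(deriv ^^ i) (T0_inverse n g) s\<bar> * phi n s powr (- q) \<le> D * Cnorm n (k - 2) q g"
    using T0_inverse_derivs_bound[of "k - 1"] k by auto
  have "T0_inverse n g \<in> Cspace n k q \<and> Cnorm n k q (T0_inverse n g) \<le> (real (k + 1) * D) * Cnorm n (k - 2) q g"
    if g: "g \<in> Cspace n (k - 2) q" for g
    using Cspace_Cnorm_le[OF Ck_T0_inverse[OF g] D[OF g]] by simp
  then show ?thesis
    by blast
qed

end

theorem lemma4p3:
  fixes n k :: nat and q :: real
  assumes "n \<ge> 3" and "k \<ge> 2" and "- real (n - 2) < q" and "q < 0"
  shows "(\<forall>f\<in>Cspace n k q. T0 n f \<in> Cspace n (k - 2) q)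
    \<and> bij_betw (T0 n) (Cspace n k q) (Cspace n (k - 2) q)
    \<and> (\<exists>C. \<forall>f\<in>Cspace n k q. Cnorm n (k - 2) q (T0 n f) \<le> C * Cnorm n k q f)
    \<and> (\<exists>C. \<forall>g\<in>Cspace n (k - 2) q.
           Cnorm n k q (inv_into (Cspace n k q) (T0 n) g) \<le> C * Cnorm n (k - 2) q g)"
proof -
  have maps: "\<forall>f\<in>Cspace n k q. T0 n f \<in> Cspace n (k - 2) q"
    using T0_Cspace_Cnorm_le(1)[OF assms(1,2)] by blast
  have inj: "inj_on (T0 n) (Cspace n k q)"
    by (rule T0_inj_on[OF assms])
  obtain C where C: "\<And>g. g \<in> Cspace n (k - 2) q \<Longrightarrow>
      T0_inverse n g \<in> Cspace n k q \<and> Cnorm n k q (T0_inverse n g) \<le> C * Cnorm n (k - 2) q g"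
    using T0_inverse_Cspace_Cnorm_le[OF assms] by blast
  have right_inverse: "T0 n (T0_inverse n g) = g" if "g \<in> Cspace n (k - 2) q" for g
    by (rule T0_T0_inverse[OF assms that])
  have inv: "inv_into (Cspace n k q) (T0 n) g = T0_inverse n g" if "g \<in> Cspace n (k - 2) q" for g
    using inj C[OF that] right_inverse[OF that] by (intro inv_into_f_eq) auto
  have "T0 n ` Cspace n k q = Cspace n (k - 2) q"
  proof
    show "Cspace n (k - 2) q \<subseteq> T0 n ` Cspace n k q"
      using C right_inverse by (metis image_eqI subsetI)
  qed (use maps in blast)
  moreover have "\<exists>C. \<forall>f\<in>Cspace n k q. Cnorm n (k - 2) q (T0 n f) \<le> C * Cnorm n k q f"
    using T0_Cspace_Cnorm_le(2)[OF assms(1,2)] by blast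
  ultimately show ?thesis
    using maps inj C inv unfolding bij_betw_def by auto
qed

end
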